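(* Let $k\geq 3$ be an odd integer and let $G$ be a connected graph of even order $n\geq 4$. (i) If $n\geq 10$ and $\lambda_1(D(G))\le \lambda_1(D(K_1\vee(K_{n-2}\cup K_1)))$, then $G$ is $\mathrm{GBC}_k$ unless $G\cong K_1\vee(K_{n-2}\cup K_1)$. (ii) If $4\le n\le 8$ and $\lambda_1(D(G))\le \lambda_1(D(S_{n,\frac{n}{2}}))$, then $G$ is $\mathrm{GBC}_k$ unless $G\cong S_{n,\frac{n}{2}}$.
   Context: All graphs are finite, simple, undirected. For a connected graph $G$, $D(G)$ is its distance matrix (entry $(i,j)$ is the distance between $v_i$ and $v_j$) and $\lambda_1(D(G))$ its largest eigenvalue. $G\cup H$ is disjoint union, $G\vee H$ the join, $tK_1$ the edgeless graph on $t$ vertices, $S_{n,k}=K_k\vee(n-k)K_1$. For a graph $H$, $i(H)$ is the number of isolated vertices of $H$ and $\mathrm{odd}(H)$ the number of components of $H$ with an odd number ($\ge 3$) of vertices. The $k$-Berge–Tutte formula is $\mathrm{def}_k(G)=\max_{S\subseteq V(G)} \big(k\, i(G-S)-k|S|\big)$ if $k$ is even, and $\max_{S\subseteq V(G)}\big(\mathrm{odd}(G-S)+k\, i(G-S)-k|S|\big)$ if $k$ is odd; a set $S$ attaining the maximum is a $k$-barrier. A connected graph of even order is $\mathrm{GBC}_k$ (generalized bicritical about integer $k$-matching) if it has no non-empty $k$-barrier. *)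

theory Defs
  imports Complex_Main
begin

definition simple_graph :: "'a set \<Rightarrow> ('a \<Rightarrow> 'a \<Rightarrow> bool) \<Rightarrow> bool" where
  "simple_graph V E \<longleftrightarrow> finite V \<and> (\<forall>u v. E u v \<longrightarrow> u \<in> V \<and> v \<in> V)
     \<and> (\<forall>u v. E u v \<longrightarrow> E v u) \<and> (\<forall>v. \<not> E v v)"

definition connected_graph :: "'a set \<Rightarrow> ('a \<Rightarrow> 'a \<Rightarrow> bool) \<Rightarrow> bool" where
  "connected_graph V E \<longleftrightarrow> V \<noteq> {} \<and> (\<forall>u\<in>V. \<forall>v\<in>V. E\<^sup>*\<^sup>* u v)"

definition gdist :: "('a \<Rightarrow> 'a \<Rightarrow> bool) \<Rightarrow> 'a \<Rightarrow> 'a \<Rightarrow> nat" where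
  "gdist E u v = (LEAST d. (E ^^ d) u v)"

definition dist_eigenvalue :: "'a set \<Rightarrow> ('a \<Rightarrow> 'a \<Rightarrow> bool) \<Rightarrow> real \<Rightarrow> bool" where
  "dist_eigenvalue V E \<mu> \<longleftrightarrow> (\<exists>x :: 'a \<Rightarrow> real. (\<exists>v\<in>V. x v \<noteq> 0) \<and>
      (\<forall>u\<in>V. (\<Sum>w\<in>V. real (gdist E u w) * x w) = \<mu> * x u))"

definition lambda1_dist :: "'a set \<Rightarrow> ('a \<Rightarrow> 'a \<Rightarrow> bool) \<Rightarrow> real" where
  "lambda1_dist V E = Max {\<mu>. dist_eigenvalue V E \<mu>}"

definition graph_iso :: "'a set \<Rightarrow> ('a \<Rightarrow> 'a \<Rightarrow> bool) \<Rightarrow> 'b set \<Rightarrow> ('b \<Rightarrow> 'b \<Rightarrow> bool) \<Rightarrow> bool" where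
  "graph_iso V E V' E' \<longleftrightarrow> (\<exists>f. bij_betw f V V' \<and> (\<forall>u\<in>V. \<forall>v\<in>V. E u v \<longleftrightarrow> E' (f u) (f v)))"

text \<open>Subgraph G - S induced on V - S.\<close>
definition del_edges :: "('a \<Rightarrow> 'a \<Rightarrow> bool) \<Rightarrow> 'a set \<Rightarrow> 'a \<Rightarrow> 'a \<Rightarrow> bool" where
  "del_edges E S u v \<longleftrightarrow> E u v \<and> u \<notin> S \<and> v \<notin> S"

definition components :: "'a set \<Rightarrow> ('a \<Rightarrow> 'a \<Rightarrow> bool) \<Rightarrow> 'a set set" where
  "components V E = (\<lambda>v. {w \<in> V. E\<^sup>*\<^sup>* v w}) ` V"

definition isolated_count :: "'a set \<Rightarrow> ('a \<Rightarrow> 'a \<Rightarrow> bool) \<Rightarrow> nat" where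
  "isolated_count V E = card {v \<in> V. \<forall>w\<in>V. \<not> E v w}"

definition odd_count :: "'a set \<Rightarrow> ('a \<Rightarrow> 'a \<Rightarrow> bool) \<Rightarrow> nat" where
  "odd_count V E = card {C \<in> components V E. odd (card C) \<and> card C \<ge> 3}"

text \<open>The quantity maximised in the k-Berge--Tutte formula, for a given S.\<close>
definition bt_value :: "nat \<Rightarrow> 'a set \<Rightarrow> ('a \<Rightarrow> 'a \<Rightarrow> bool) \<Rightarrow> 'a set \<Rightarrow> int" where
  "bt_value k V E S =
     (let i = int (isolated_count (V - S) (del_edges E S));
          od = int (odd_count (V - S) (del_edges E S))
      in if even k then int k * i - int k * int (card S)
         else od + int k * i - int k * int (card S))"

definition def_k :: "nat \<Rightarrow> 'a set \<Rightarrow> ('a \<Rightarrow> 'a \<Rightarrow> bool) \<Rightarrow> int" where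
  "def_k k V E = Max {bt_value k V E S | S. S \<subseteq> V}"

definition k_barrier :: "nat \<Rightarrow> 'a set \<Rightarrow> ('a \<Rightarrow> 'a \<Rightarrow> bool) \<Rightarrow> 'a set \<Rightarrow> bool" where
  "k_barrier k V E S \<longleftrightarrow> S \<subseteq> V \<and> bt_value k V E S = def_k k V E"

definition GBC :: "nat \<Rightarrow> 'a set \<Rightarrow> ('a \<Rightarrow> 'a \<Rightarrow> bool) \<Rightarrow> bool" where
  "GBC k V E \<longleftrightarrow> connected_graph V E \<and> even (card V) \<and>
     (\<forall>S. S \<noteq> {} \<longrightarrow> \<not> k_barrier k V E S)"

text \<open>K_1 \<or> (K_{n-2} \<union> K_1) on {0..<n}: 0 is the K_1 hub, n-1 the pendant vertex.\<close>
definition K1_join_Kn2_K1 :: "nat \<Rightarrow> nat \<Rightarrow> nat \<Rightarrow> bool" where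
  "K1_join_Kn2_K1 n u v \<longleftrightarrow> u < n \<and> v < n \<and> u \<noteq> v \<and>
     (u = 0 \<or> v = 0 \<or> (u < n - 1 \<and> v < n - 1))"

text \<open>S_{n,k} = K_k \<or> (n-k)K_1 on {0..<n}: the clique is {0..<k}.\<close>
definition S_graph :: "nat \<Rightarrow> nat \<Rightarrow> nat \<Rightarrow> nat \<Rightarrow> bool" where
  "S_graph n k u v \<longleftrightarrow> u < n \<and> v < n \<and> u \<noteq> v \<and> (u < k \<or> v < k)"

end

(*
  If G is not GBC_k, some nonempty k-barrier S has nonnegative Berge-Tutte value.  Writing i for
  the number of isolated vertices of G - S, for odd k >= 3 this leaves three cases: i < |S| and
  G - S has at least 3 (|S| - i) odd components; or i >= |S| and i >= 2; or |S| = i = 1, when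
  G has a pendant vertex.  In the first two cases many pairs of vertices lie in different
  components of G - S, hence at distance at least 2 in G, and the Rayleigh quotient of the
  all-ones vector pushes lambda1(D(G)) above an explicit threshold.  A pendant vertex, or
  |S| = n/2 with V - S independent, makes D(G) entrywise at least the distance matrix of
  K_1 \<or> (K_{n-2} \<union> K_1), resp. S_{n,n/2}, copied onto V; the Rayleigh quotient of the
  positive eigenvector of that extremal graph then gives lambda1(D(G)) >= lambda1 of the
  extremal graph, strictly unless G is isomorphic to it.  The spectral radii of the extremal
  graphs are located with the intermediate value theorem applied to their eigen-equations.
*)
theory Submission
  imports Defs
begin

section \<open>Eigenvalues of symmetric matrices\<close>

definition has_eigenvalue :: "('a \<Rightarrow> 'a \<Rightarrow> real) \<Rightarrow> 'a set \<Rightarrow> real \<Rightarrow> bool" where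
  "has_eigenvalue M V \<mu> \<longleftrightarrow>
     (\<exists>x. (\<exists>v\<in>V. x v \<noteq> 0) \<and> (\<forall>u\<in>V. (\<Sum>w\<in>V. M u w * x w) = \<mu> * x u))"

definition mat_vec :: "('a \<Rightarrow> 'a \<Rightarrow> real) \<Rightarrow> 'a set \<Rightarrow> ('a \<Rightarrow> real) \<Rightarrow> 'a \<Rightarrow> real" where
  "mat_vec M V x u = (\<Sum>w\<in>V. M u w * x w)"

definition quad_form :: "('a \<Rightarrow> 'a \<Rightarrow> real) \<Rightarrow> 'a set \<Rightarrow> ('a \<Rightarrow> real) \<Rightarrow> real" where
  "quad_form M V x = (\<Sum>u\<in>V. x u * mat_vec M V x u)"

definition sq_norm :: "'a set \<Rightarrow> ('a \<Rightarrow> real) \<Rightarrow> real" where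
  "sq_norm V x = (\<Sum>u\<in>V. (x u)\<^sup>2)"

lemma eigenvalue_le_of_positive_eigenvector:
  fixes M :: "'a \<Rightarrow> 'a \<Rightarrow> real"
  assumes fin: "finite V" and nonneg: "\<And>u w. u \<in> V \<Longrightarrow> w \<in> V \<Longrightarrow> 0 \<le> M u w"
    and ypos: "\<And>u. u \<in> V \<Longrightarrow> 0 < y u"
    and ey: "\<And>u. u \<in> V \<Longrightarrow> (\<Sum>w\<in>V. M u w * y w) = \<theta> * y u"
    and eig: "has_eigenvalue M V \<mu>"
  shows "\<mu> \<le> \<theta>"
proof -
  obtain x where "\<exists>v\<in>V. x v \<noteq> 0" and ex: "\<And>u. u \<in> V \<Longrightarrow> (\<Sum>w\<in>V. M u w * x w) = \<mu> * x u"
    using eig unfolding has_eigenvalue_def by blast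
  then obtain v where v: "v \<in> V" "x v \<noteq> 0" by blast
  define r where "r u = \<bar>x u\<bar> / y u" for u
  define t where "t = Max (r ` V)"
  \<comment> \<open>Compare x with y at a vertex where the ratio r is maximal.\<close>
  have "t \<in> r ` V" unfolding t_def using fin v by (intro Max_in) auto
  then obtain i where i: "i \<in> V" "t = r i" by blast
  have r_le: "r u \<le> t" if "u \<in> V" for u
    unfolding t_def using fin that by (intro Max_ge) auto
  have "0 < r v" unfolding r_def using ypos[OF v(1)] v(2) by auto
  then have "0 < t" using r_le[OF v(1)] by linarith
  have xw: "\<bar>x w\<bar> \<le> t * y w" if "w \<in> V" for w
    using r_le[OF that] ypos[OF that] unfolding r_def by (simp add: divide_le_eq)
  have "\<bar>\<mu>\<bar> * (t * y i) = \<bar>\<Sum>w\<in>V. M i w * x w\<bar>"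
    using ex[OF i(1)] i ypos[OF i(1)] by (simp add: abs_mult r_def)
  also have "\<dots> \<le> (\<Sum>w\<in>V. M i w * (t * y w))"
    by (rule order_trans[OF sum_abs sum_mono]) (simp add: abs_mult nonneg i(1) xw mult_left_mono)
  also have "\<dots> = t * (\<Sum>w\<in>V. M i w * y w)"
    by (simp add: sum_distrib_left algebra_simps)
  also have "\<dots> = \<theta> * (t * y i)"
    using ey[OF i(1)] by simp
  finally have "\<bar>\<mu>\<bar> \<le> \<theta>"
    using \<open>0 < t\<close> ypos[OF i(1)] by (simp add: mult_le_cancel_right)
  then show ?thesis by simp
qed

lemma eigenvectors_orthogonal:
  fixes M :: "'a \<Rightarrow> 'a \<Rightarrow> real"
  assumes sym: "\<And>u w. u \<in> V \<Longrightarrow> w \<in> V \<Longrightarrow> M u w = M w u"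
    and ex: "\<And>u. u \<in> V \<Longrightarrow> (\<Sum>w\<in>V. M u w * x w) = \<mu> * x u"
    and ey: "\<And>u. u \<in> V \<Longrightarrow> (\<Sum>w\<in>V. M u w * y w) = \<nu> * y u"
    and "\<mu> \<noteq> \<nu>"
  shows "(\<Sum>u\<in>V. x u * y u) = 0"
proof -
  have "\<mu> * (\<Sum>u\<in>V. x u * y u) = (\<Sum>u\<in>V. (\<Sum>w\<in>V. M u w * x w) * y u)"
    by (simp add: sum_distrib_left ex mult.assoc)
  also have "\<dots> = (\<Sum>u\<in>V. \<Sum>w\<in>V. M u w * x w * y u)"
    by (simp add: sum_distrib_right)
  also have "\<dots> = (\<Sum>w\<in>V. \<Sum>u\<in>V. M u w * x w * y u)"
    by (rule sum.swap)
  also have "\<dots> = (\<Sum>w\<in>V. x w * (\<Sum>u\<in>V. M w u * y u))"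
    by (intro sum.cong refl) (simp add: sum_distrib_left sym algebra_simps)
  also have "\<dots> = (\<Sum>w\<in>V. \<nu> * (x w * y w))"
    by (intro sum.cong refl) (simp add: ey)
  also have "\<dots> = \<nu> * (\<Sum>u\<in>V. x u * y u)"
    by (simp add: sum_distrib_left)
  finally show ?thesis using \<open>\<mu> \<noteq> \<nu>\<close> by (metis mult_right_cancel)
qed

lemma sum_sq_orthonormal_le_1:
  fixes e :: "'i \<Rightarrow> 'a \<Rightarrow> real"
  assumes fin: "finite V" and finF: "finite F"
    and on: "\<And>i j. i \<in> F \<Longrightarrow> j \<in> F \<Longrightarrow> (\<Sum>u\<in>V. e i u * e j u) = (if i = j then 1 else 0)"
    and v: "v \<in> V"
  shows "(\<Sum>i\<in>F. (e i v)\<^sup>2) \<le> 1"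
proof -
  \<comment> \<open>Bessel's inequality for the unit vector at v: its projection p has norm at most 1.\<close>
  define d where "d u = (if u = v then 1 else (0::real))" for u
  define p where "p u = (\<Sum>i\<in>F. e i v * e i u)" for u
  have dd: "(\<Sum>u\<in>V. d u * d u) = 1"
  proof -
    have "(\<Sum>u\<in>V. d u * d u) = (\<Sum>u\<in>V. if v = u then 1 else 0)"
      by (intro sum.cong) (auto simp: d_def)
    then show ?thesis using fin v by simp
  qed
  have dp: "(\<Sum>u\<in>V. d u * p u) = p v"
  proof -
    have "(\<Sum>u\<in>V. d u * p u) = (\<Sum>u\<in>V. if v = u then p u else 0)"
      by (intro sum.cong) (auto simp: d_def)
    then show ?thesis using fin v by simp
  qed
  have "(\<Sum>u\<in>V. p u * p u) = (\<Sum>u\<in>V. \<Sum>i\<in>F. \<Sum>j\<in>F. e i v * e j v * (e i u * e j u))"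
    unfolding p_def by (simp add: sum_product algebra_simps)
  also have "\<dots> = (\<Sum>i\<in>F. \<Sum>j\<in>F. \<Sum>u\<in>V. e i v * e j v * (e i u * e j u))"
    by (subst sum.swap) (intro sum.cong refl sum.swap)
  also have "\<dots> = (\<Sum>i\<in>F. \<Sum>j\<in>F. if i = j then e i v * e j v else 0)"
    by (intro sum.cong refl) (simp add: on flip: sum_distrib_left)
  also have "\<dots> = (\<Sum>i\<in>F. (e i v)\<^sup>2)"
    using finF by (simp add: power2_eq_square)
  finally have pp: "(\<Sum>u\<in>V. p u * p u) = (\<Sum>i\<in>F. (e i v)\<^sup>2)" .
  have "0 \<le> (\<Sum>u\<in>V. (d u - p u)\<^sup>2)" by (intro sum_nonneg) simp
  also have "\<dots> = (\<Sum>u\<in>V. d u * d u) - 2 * (\<Sum>u\<in>V. d u * p u) + (\<Sum>u\<in>V. p u * p u)"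
    by (simp add: power2_eq_square algebra_simps sum.distrib sum_subtractf sum_distrib_left)
  finally show ?thesis
    unfolding dd dp pp by (simp add: p_def power2_eq_square)
qed

lemma card_orthonormal_le:
  fixes e :: "'i \<Rightarrow> 'a \<Rightarrow> real"
  assumes fin: "finite V" and finF: "finite F"
    and on: "\<And>i j. i \<in> F \<Longrightarrow> j \<in> F \<Longrightarrow> (\<Sum>u\<in>V. e i u * e j u) = (if i = j then 1 else 0)"
  shows "card F \<le> card V"
proof -
  have "real (card F) = (\<Sum>i\<in>F. \<Sum>u\<in>V. e i u * e i u)" by (simp add: on)
  also have "\<dots> = (\<Sum>u\<in>V. \<Sum>i\<in>F. (e i u)\<^sup>2)" by (subst sum.swap) (simp add: power2_eq_square)
  also have "\<dots> \<le> (\<Sum>u\<in>V. 1)" by (intro sum_mono sum_sq_orthonormal_le_1[OF fin finF on])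
  finally show ?thesis by simp
qed

lemma finite_eigenvalues:
  fixes M :: "'a \<Rightarrow> 'a \<Rightarrow> real"
  assumes fin: "finite V" and sym: "\<And>u w. u \<in> V \<Longrightarrow> w \<in> V \<Longrightarrow> M u w = M w u"
  shows "finite {\<mu>. has_eigenvalue M V \<mu>}"
proof (rule ccontr)
  assume "infinite {\<mu>. has_eigenvalue M V \<mu>}"
  \<comment> \<open>Normalised eigenvectors for card V + 1 distinct eigenvalues would be orthonormal.\<close>
  then obtain F where F: "F \<subseteq> {\<mu>. has_eigenvalue M V \<mu>}" "finite F" "card F = Suc (card V)"
    using infinite_arbitrarily_large by blast
  define x where "x \<mu> = (SOME x. (\<exists>v\<in>V. x v \<noteq> 0) \<and> (\<forall>u\<in>V. (\<Sum>w\<in>V. M u w * x w) = \<mu> * x u))"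
    for \<mu>
  have x: "(\<exists>v\<in>V. x \<mu> v \<noteq> 0) \<and> (\<forall>u\<in>V. (\<Sum>w\<in>V. M u w * x \<mu> w) = \<mu> * x \<mu> u)"
    if "\<mu> \<in> F" for \<mu>
  proof -
    have "has_eigenvalue M V \<mu>" using F(1) that by blast
    then show ?thesis unfolding x_def has_eigenvalue_def by (rule someI_ex)
  qed
  have pos: "0 < sq_norm V (x \<mu>)" if \<mu>: "\<mu> \<in> F" for \<mu>
  proof -
    obtain v where "v \<in> V" "x \<mu> v \<noteq> 0" using x[OF \<mu>] by blast
    then have "0 < (x \<mu> v)\<^sup>2" by simp
    also have "\<dots> \<le> sq_norm V (x \<mu>)"
      unfolding sq_norm_def using fin \<open>v \<in> V\<close> by (intro member_le_sum) auto
    finally show ?thesis .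
  qed
  define e where "e \<mu> u = x \<mu> u / sqrt (sq_norm V (x \<mu>))" for \<mu> u
  have "(\<Sum>u\<in>V. e i u * e j u) = (if i = j then 1 else 0)" if "i \<in> F" "j \<in> F" for i j
  proof (cases "i = j")
    case True
    have "(\<Sum>u\<in>V. e i u * e j u) = (\<Sum>u\<in>V. (x i u)\<^sup>2) / sq_norm V (x i)"
      using True pos[OF that(1)] by (simp add: e_def sum_divide_distrib power2_eq_square)
    then show ?thesis using True pos[OF that(1)] by (simp add: sq_norm_def)
  next
    case False
    have "(\<Sum>u\<in>V. x i u * x j u) = 0"
      by (rule eigenvectors_orthogonal[where M = M and \<mu> = i and \<nu> = j])
        (use sym x[OF that(1)] x[OF that(2)] False in auto)
    then show ?thesis using False by (simp add: e_def sum_divide_distrib[symmetric])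
  qed
  then have "card F \<le> card V" by (rule card_orthonormal_le[OF fin F(2)])
  then show False using F(3) by simp
qed

lemma convergent_subseq_finite:
  fixes X :: "nat \<Rightarrow> 'a \<Rightarrow> real"
  assumes "finite V" and "\<And>m u. u \<in> V \<Longrightarrow> \<bar>X m u\<bar> \<le> B"
  shows "\<exists>r. strict_mono r \<and> (\<forall>u\<in>V. convergent (\<lambda>m. X (r m) u))"
  using assms
proof (induction V rule: finite_induct)
  case empty
  show ?case by (intro exI[of _ id]) (auto simp: strict_mono_def)
next
  case (insert v V)
  then obtain r where r: "strict_mono r" "\<forall>u\<in>V. convergent (\<lambda>m. X (r m) u)" by auto
  obtain r2 where r2: "strict_mono r2" "monoseq (\<lambda>n. X (r (r2 n)) v)"
    using seq_monosub[of "\<lambda>n. X (r n) v"] by (auto simp: o_def)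
  have "Bseq (\<lambda>n. X (r (r2 n)) v)"
    using insert.prems by (intro BseqI'[of _ B]) auto
  then have "convergent (\<lambda>n. X (r (r2 n)) v)" using r2(2) by (rule Bseq_monoseq_convergent)
  moreover have "convergent (\<lambda>m. X (r (r2 m)) u)" if "u \<in> V" for u
    using convergent_subseq_convergent[OF r(2)[rule_format, OF that] r2(1)] by (simp add: o_def)
  ultimately show ?case using r(1) r2(1)
    by (intro exI[of _ "r \<circ> r2"]) (auto simp: strict_mono_def)
qed

lemma sq_norm_nonneg: "0 \<le> sq_norm V x"
  unfolding sq_norm_def by (intro sum_nonneg) auto

lemma sq_norm_eq_0: "finite V \<Longrightarrow> sq_norm V x = 0 \<Longrightarrow> u \<in> V \<Longrightarrow> x u = 0"
  unfolding sq_norm_def by (subst (asm) sum_nonneg_eq_0_iff) auto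

lemma sq_norm_pos: "finite V \<Longrightarrow> v \<in> V \<Longrightarrow> x v \<noteq> 0 \<Longrightarrow> 0 < sq_norm V x"
  using sq_norm_eq_0[of V x v] sq_norm_nonneg[of V x] by fastforce

lemma quad_form_double_sum: "quad_form M V x = (\<Sum>u\<in>V. \<Sum>w\<in>V. M u w * x u * x w)"
  unfolding quad_form_def mat_vec_def by (simp add: sum_distrib_left algebra_simps)

lemma quad_form_scale: "quad_form M V (\<lambda>u. c * x u) = c\<^sup>2 * quad_form M V x"
  unfolding quad_form_double_sum by (simp add: sum_distrib_left power2_eq_square algebra_simps)

lemma sq_norm_scale: "sq_norm V (\<lambda>u. c * x u) = c\<^sup>2 * sq_norm V x"
  unfolding sq_norm_def by (simp add: sum_distrib_left power_mult_distrib)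

lemma quad_form_add:
  assumes sym: "\<And>u w. u \<in> V \<Longrightarrow> w \<in> V \<Longrightarrow> M u w = M w u"
  shows "quad_form M V (\<lambda>u. a u + t * b u) =
    quad_form M V a + 2 * t * (\<Sum>u\<in>V. b u * mat_vec M V a u) + t\<^sup>2 * quad_form M V b"
proof -
  have "(\<Sum>u\<in>V. a u * mat_vec M V b u) = (\<Sum>u\<in>V. \<Sum>w\<in>V. M u w * a u * b w)"
    unfolding mat_vec_def by (simp add: sum_distrib_left algebra_simps)
  also have "\<dots> = (\<Sum>w\<in>V. \<Sum>u\<in>V. M u w * a u * b w)" by (rule sum.swap)
  also have "\<dots> = (\<Sum>u\<in>V. b u * mat_vec M V a u)"
    unfolding mat_vec_def by (intro sum.cong refl) (simp add: sum_distrib_left sym algebra_simps)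
  finally have swap: "(\<Sum>u\<in>V. a u * mat_vec M V b u) = (\<Sum>u\<in>V. b u * mat_vec M V a u)" .
  have "mat_vec M V (\<lambda>u. a u + t * b u) u = mat_vec M V a u + t * mat_vec M V b u" for u
    unfolding mat_vec_def by (simp add: algebra_simps sum.distrib sum_distrib_left)
  then have "quad_form M V (\<lambda>u. a u + t * b u) = quad_form M V a
      + t * (\<Sum>u\<in>V. a u * mat_vec M V b u) + t * (\<Sum>u\<in>V. b u * mat_vec M V a u)
      + t\<^sup>2 * quad_form M V b"
    unfolding quad_form_def
      by (simp add: algebra_simps sum.distrib sum_distrib_left power2_eq_square)
  then show ?thesis unfolding swap by simp
qed

lemma sq_norm_add:
  "sq_norm V (\<lambda>u. a u + t * b u) = sq_norm V a + 2 * t * (\<Sum>u\<in>V. a u * b u) + t\<^sup>2 * sq_norm V b"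
  unfolding sq_norm_def by (simp add: algebra_simps sum.distrib sum_distrib_left power2_eq_square)

lemma quad_form_attains_max_on_sphere:
  fixes M :: "'a \<Rightarrow> 'a \<Rightarrow> real"
  assumes fin: "finite V" and "V \<noteq> {}"
  shows "\<exists>z. sq_norm V z = 1 \<and> (\<forall>x. sq_norm V x = 1 \<longrightarrow> quad_form M V x \<le> quad_form M V z)"
proof -
  define Sph where "Sph = {x. sq_norm V x = 1}"
  obtain v0 where v0: "v0 \<in> V" using \<open>V \<noteq> {}\<close> by blast
  have "sq_norm V (\<lambda>u. if u = v0 then 1 else 0) = (\<Sum>u\<in>V. if v0 = u then 1 else 0)"
    unfolding sq_norm_def by (intro sum.cong) auto
  then have "(\<lambda>u. if u = v0 then 1 else 0) \<in> Sph" using fin v0 by (simp add: Sph_def)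
  then have Sph_ne: "Sph \<noteq> {}" by blast
  have coord_le: "\<bar>x u\<bar> \<le> 1" if "x \<in> Sph" "u \<in> V" for x u
  proof -
    have "(x u)\<^sup>2 \<le> sq_norm V x" unfolding sq_norm_def using fin that(2)
      by (intro member_le_sum) auto
    then show ?thesis using that(1) by (simp add: Sph_def abs_square_le_1)
  qed
  have "quad_form M V x \<le> (\<Sum>u\<in>V. \<Sum>w\<in>V. \<bar>M u w\<bar>)" if "x \<in> Sph" for x
    unfolding quad_form_double_sum
  proof (intro sum_mono)
    fix u w assume "u \<in> V" "w \<in> V"
    then have "\<bar>x u\<bar> * \<bar>x w\<bar> \<le> 1 * 1" using coord_le[OF that] by (intro mult_mono) auto
    then have "\<bar>M u w\<bar> * (\<bar>x u\<bar> * \<bar>x w\<bar>) \<le> \<bar>M u w\<bar>" by (simp add: mult_left_le)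
    then have "\<bar>M u w * x u * x w\<bar> \<le> \<bar>M u w\<bar>" by (simp add: abs_mult mult.assoc)
    then show "M u w * x u * x w \<le> \<bar>M u w\<bar>" by linarith
  qed
  then have bdd: "bdd_above (quad_form M V ` Sph)" by (intro bdd_aboveI2)
  define \<sigma> where "\<sigma> = Sup (quad_form M V ` Sph)"
  have le_\<sigma>: "quad_form M V x \<le> \<sigma>" if "x \<in> Sph" for x
    unfolding \<sigma>_def using bdd that by (intro cSup_upper) auto
  have "\<exists>x\<in>Sph. \<sigma> - 1 / (real m + 1) < quad_form M V x" for m :: nat
  proof -
    have "\<sigma> - 1 / (real m + 1) < \<sigma>" by simp
    then show ?thesis unfolding \<sigma>_def using Sph_ne bdd by (subst (asm) less_cSup_iff) auto
  qed
  then obtain X where X: "\<And>m. X m \<in> Sph" "\<And>m. \<sigma> - 1 / (real m + 1) < quad_form M V (X m)"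
    by metis
  \<comment> \<open>A maximising sequence on the unit sphere has a convergent subsequence; its limit
    z is a maximiser.\<close>
  obtain r where r: "strict_mono r" "\<forall>u\<in>V. convergent (\<lambda>m. X (r m) u)"
    using convergent_subseq_finite[OF fin, of X 1] coord_le X(1) by blast
  define z where "z u = lim (\<lambda>m. X (r m) u)" for u
  have lim_z: "(\<lambda>m. X (r m) u) \<longlonglongrightarrow> z u" if "u \<in> V" for u
    using r(2) that by (simp add: z_def convergent_LIMSEQ_iff)
  have lim_q: "(\<lambda>m. quad_form M V (X (r m))) \<longlonglongrightarrow> quad_form M V z"
    unfolding quad_form_double_sum by (intro tendsto_sum tendsto_mult tendsto_const lim_z)
  have "(\<lambda>m. sq_norm V (X (r m))) \<longlonglongrightarrow> sq_norm V z"
    unfolding sq_norm_def by (intro tendsto_sum tendsto_power lim_z)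
  moreover have "(\<lambda>m. sq_norm V (X (r m))) = (\<lambda>m. 1)" using X(1) by (simp add: Sph_def)
  ultimately have "sq_norm V z = 1" using LIMSEQ_unique[OF tendsto_const] by metis
  have approx: "\<sigma> - 1 / (real m0 + 1) \<le> quad_form M V z" for m0
  proof (rule LIMSEQ_le_const[OF lim_q], intro exI[of _ m0] allI impI)
    fix m assume "m0 \<le> m"
    then have "m0 \<le> r m" using seq_suble[OF r(1), of m] by simp
    then have "1 / (real (r m) + 1) \<le> 1 / (real m0 + 1)" by (intro divide_left_mono) auto
    then show "\<sigma> - 1 / (real m0 + 1) \<le> quad_form M V (X (r m))" using X(2)[of "r m"] by linarith
  qed
  have "\<sigma> \<le> quad_form M V z"
  proof (rule ccontr)
    assume "\<not> \<sigma> \<le> quad_form M V z"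
    then obtain m0 where "inverse (real (Suc m0)) < \<sigma> - quad_form M V z"
      using reals_Archimedean by (metis diff_gt_0_iff_gt not_le)
    then show False using approx[of m0] by (simp add: inverse_eq_divide add.commute)
  qed
  then show ?thesis using \<open>sq_norm V z = 1\<close> le_\<sigma> unfolding Sph_def by (intro exI[of _ z]) force
qed

lemma rayleigh_maximiser_eigenvector:
  fixes M :: "'a \<Rightarrow> 'a \<Rightarrow> real"
  assumes fin: "finite V" and sym: "\<And>u w. u \<in> V \<Longrightarrow> w \<in> V \<Longrightarrow> M u w = M w u"
    and le: "\<And>x. quad_form M V x \<le> \<sigma> * sq_norm V x"
    and eq: "quad_form M V z = \<sigma> * sq_norm V z"
    and u: "u \<in> V"
  shows "mat_vec M V z u = \<sigma> * z u"
proof -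
  define d where "d u = mat_vec M V z u - \<sigma> * z u" for u
  define K where "K = quad_form M V d - \<sigma> * sq_norm V d"
  have cross: "(\<Sum>u\<in>V. d u * mat_vec M V z u) - \<sigma> * (\<Sum>u\<in>V. z u * d u) = sq_norm V d"
    unfolding sq_norm_def d_def
    by (simp add: power2_eq_square algebra_simps sum_subtractf sum_distrib_left sum.distrib)
  \<comment> \<open>Perturbing z in the direction d would beat the maximum unless d = 0.\<close>
  have perturb: "2 * sq_norm V d + t * K \<le> 0" if "0 < t" for t
  proof -
    have "quad_form M V (\<lambda>u. z u + t * d u) \<le> \<sigma> * sq_norm V (\<lambda>u. z u + t * d u)" by (rule le)
    moreover have "quad_form M V (\<lambda>u. z u + t * d u) =
        quad_form M V z + 2 * t * (\<Sum>u\<in>V. d u * mat_vec M V z u) + t\<^sup>2 * quad_form M V d"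
      by (rule quad_form_add[OF sym])
    ultimately have "t * (2 * sq_norm V d + t * K) \<le> 0"
      using eq cross unfolding sq_norm_add K_def by (simp add: algebra_simps power2_eq_square)
    then show ?thesis using \<open>0 < t\<close> by (simp add: mult_le_0_iff)
  qed
  have "sq_norm V d = 0"
  proof (rule ccontr)
    assume "sq_norm V d \<noteq> 0"
    then have pos: "0 < sq_norm V d" using sq_norm_nonneg[of V d] by linarith
    define t where "t = sq_norm V d / (\<bar>K\<bar> + 1)"
    have "0 < t" using pos by (simp add: t_def)
    have "t * \<bar>K\<bar> \<le> sq_norm V d" using pos by (simp add: t_def field_simps)
    moreover have "- (t * \<bar>K\<bar>) \<le> t * K"
      using \<open>0 < t\<close> mult_left_mono[of "- \<bar>K\<bar>" K t] by simp
    ultimately show False using perturb[OF \<open>0 < t\<close>] pos by linarith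
  qed
  then have "d u = 0" by (rule sq_norm_eq_0[OF fin _ u])
  then show ?thesis by (simp add: d_def)
qed

lemma quad_form_le_eigenvalue:
  fixes M :: "'a \<Rightarrow> 'a \<Rightarrow> real"
  assumes fin: "finite V" and sym: "\<And>u w. u \<in> V \<Longrightarrow> w \<in> V \<Longrightarrow> M u w = M w u"
    and pos: "0 < sq_norm V y"
  shows "\<exists>\<mu>. has_eigenvalue M V \<mu> \<and> quad_form M V y \<le> \<mu> * sq_norm V y"
proof -
  have "V \<noteq> {}" using pos by (auto simp: sq_norm_def)
  then obtain z where z: "sq_norm V z = 1"
    and max: "\<And>x. sq_norm V x = 1 \<Longrightarrow> quad_form M V x \<le> quad_form M V z"
    using quad_form_attains_max_on_sphere[OF fin] by blast
  define \<sigma> where "\<sigma> = quad_form M V z"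
  have le: "quad_form M V x \<le> \<sigma> * sq_norm V x" for x
  proof (cases "sq_norm V x = 0")
    case True
    then have "\<forall>u\<in>V. x u = 0" using sq_norm_eq_0[OF fin] by blast
    then show ?thesis using True by (simp add: quad_form_def)
  next
    case False
    then have "0 < sq_norm V x" using sq_norm_nonneg[of V x] by linarith
    define c where "c = 1 / sqrt (sq_norm V x)"
    have c2: "c\<^sup>2 = 1 / sq_norm V x" using \<open>0 < sq_norm V x\<close> by (simp add: c_def power_divide)
    have "sq_norm V (\<lambda>u. c * x u) = 1" using \<open>0 < sq_norm V x\<close> by (simp add: sq_norm_scale c2)
    then have "quad_form M V (\<lambda>u. c * x u) \<le> \<sigma>" using max by (simp add: \<sigma>_def)
    then have "quad_form M V x / sq_norm V x \<le> \<sigma>" by (simp add: quad_form_scale c2)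
    then show ?thesis using \<open>0 < sq_norm V x\<close> by (simp add: divide_le_eq)
  qed
  have "\<forall>u\<in>V. (\<Sum>w\<in>V. M u w * z w) = \<sigma> * z u"
    using rayleigh_maximiser_eigenvector[OF fin sym le] z by (simp add: \<sigma>_def mat_vec_def)
  moreover have "\<exists>v\<in>V. z v \<noteq> 0"
  proof (rule ccontr)
    assume "\<not> (\<exists>v\<in>V. z v \<noteq> 0)"
    then have "sq_norm V z = 0" by (simp add: sq_norm_def)
    then show False using z by simp
  qed
  ultimately have "has_eigenvalue M V \<sigma>" unfolding has_eigenvalue_def by blast
  then show ?thesis using le by blast
qed

section \<open>The distance spectral radius\<close>

definition dist_mat :: "('a \<Rightarrow> 'a \<Rightarrow> bool) \<Rightarrow> 'a \<Rightarrow> 'a \<Rightarrow> real" where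
  "dist_mat E u w = real (gdist E u w)"

lemma relpowp_converse:
  assumes "\<And>a b. E a b \<Longrightarrow> E b a" and "(E ^^ n) x y"
  shows "(E ^^ n) y x"
  using assms(2)
proof (induction n arbitrary: x y)
  case (Suc n)
  from Suc.prems obtain z where "(E ^^ n) x z" "E z y" by (rule relpowp_Suc_E)
  then show ?case using Suc.IH assms(1) by (intro relpowp_Suc_I2[of E y z]) auto
qed simp

lemma gdist_sym:
  assumes "\<And>a b. E a b \<Longrightarrow> E b a"
  shows "gdist E u w = gdist E w u"
proof -
  have "(E ^^ d) u w = (E ^^ d) w u" for d
    using relpowp_converse[of E, OF assms] by blast
  then show ?thesis unfolding gdist_def by simp
qed

lemma gdist_self [simp]: "gdist E u u = 0"
  unfolding gdist_def by (rule Least_eq_0) simp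

lemma gdist_le: "(E ^^ d) u w \<Longrightarrow> gdist E u w \<le> d"
  unfolding gdist_def by (rule Least_le)

lemma gdist_walk: "(E ^^ d) u w \<Longrightarrow> (E ^^ gdist E u w) u w"
  unfolding gdist_def by (rule LeastI)

lemma gdist_ge_1:
  assumes "(E ^^ d) u w" "u \<noteq> w"
  shows "1 \<le> gdist E u w"
  using gdist_walk[OF assms(1)] assms(2) by (cases "gdist E u w") auto

lemma gdist_ge_2:
  assumes "(E ^^ d) u w" "u \<noteq> w" "\<not> E u w"
  shows "2 \<le> gdist E u w"
proof -
  have walk: "(E ^^ gdist E u w) u w" by (rule gdist_walk[OF assms(1)])
  have "gdist E u w \<noteq> 1" using walk assms(3) by (metis relpowp_1)
  moreover have "1 \<le> gdist E u w" by (rule gdist_ge_1[OF assms(1,2)])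
  ultimately show ?thesis by linarith
qed

lemma gdist_eq_1: "E u w \<Longrightarrow> u \<noteq> w \<Longrightarrow> gdist E u w = 1"
  using gdist_le[where d = 1] gdist_ge_1[where d = 1] by (metis le_antisym relpowp_1)

lemma gdist_eq_2:
  assumes "E u x" "E x w" "u \<noteq> w" "\<not> E u w"
  shows "gdist E u w = 2"
proof -
  have "(E ^^ 2) u w" using assms(1,2) by (auto simp: numeral_2_eq_2 intro: relpowp_Suc_I2)
  then show ?thesis using gdist_le gdist_ge_2 assms(3,4) by (metis le_antisym)
qed

lemma connected_graph_walk:
  assumes "connected_graph V E" "u \<in> V" "w \<in> V"
  obtains d where "(E ^^ d) u w"
  using assms unfolding connected_graph_def by (meson rtranclp_imp_relpowp)

lemma dist_mat_ge_1:
  "connected_graph V E \<Longrightarrow> u \<in> V \<Longrightarrow> w \<in> V \<Longrightarrow> u \<noteq> w \<Longrightarrow> 1 \<le> dist_mat E u w"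
  unfolding dist_mat_def by (metis connected_graph_walk gdist_ge_1 of_nat_1 of_nat_le_iff)

lemma dist_mat_ge_2:
  "connected_graph V E \<Longrightarrow> u \<in> V \<Longrightarrow> w \<in> V \<Longrightarrow> u \<noteq> w \<Longrightarrow> \<not> E u w \<Longrightarrow> 2 \<le> dist_mat E u w"
  unfolding dist_mat_def by (metis connected_graph_walk gdist_ge_2 of_nat_numeral of_nat_le_iff)

lemma dist_mat_sym: "(\<And>a b. E a b \<Longrightarrow> E b a) \<Longrightarrow> dist_mat E u w = dist_mat E w u"
  unfolding dist_mat_def using gdist_sym by metis

lemma lambda1_dist_eq_Max: "lambda1_dist V E = Max {\<mu>. has_eigenvalue (dist_mat E) V \<mu>}"
  unfolding lambda1_dist_def dist_eigenvalue_def has_eigenvalue_def dist_mat_def by simp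

lemma eigenvalue_le_lambda1_dist:
  assumes "finite V" "\<And>a b. E a b \<Longrightarrow> E b a" "has_eigenvalue (dist_mat E) V \<mu>"
  shows "\<mu> \<le> lambda1_dist V E"
  unfolding lambda1_dist_eq_Max
  using assms finite_eigenvalues[of V "dist_mat E"] dist_mat_sym[of E] by (intro Max_ge) auto

lemma quad_form_le_lambda1_dist:
  assumes "finite V" "\<And>a b. E a b \<Longrightarrow> E b a" "0 < sq_norm V y"
  shows "quad_form (dist_mat E) V y \<le> lambda1_dist V E * sq_norm V y"
proof -
  obtain \<mu> where "has_eigenvalue (dist_mat E) V \<mu>" "quad_form (dist_mat E) V y \<le> \<mu> * sq_norm V y"
    using quad_form_le_eigenvalue[of V "dist_mat E" y] assms dist_mat_sym[of E] by blast
  moreover have "\<mu> \<le> lambda1_dist V E"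
    using eigenvalue_le_lambda1_dist assms calculation(1) by blast
  then have "\<mu> * sq_norm V y \<le> lambda1_dist V E * sq_norm V y"
    using assms(3) by (simp add: mult_right_mono)
  ultimately show ?thesis by linarith
qed

lemma lambda1_dist_eq_positive_eigenvalue:
  assumes fin: "finite V" and sym: "\<And>a b. E a b \<Longrightarrow> E b a" and "V \<noteq> {}"
    and pos: "\<And>u. u \<in> V \<Longrightarrow> 0 < y u"
    and ey: "\<And>u. u \<in> V \<Longrightarrow> (\<Sum>w\<in>V. dist_mat E u w * y w) = \<theta> * y u"
  shows "lambda1_dist V E = \<theta>"
proof -
  have "has_eigenvalue (dist_mat E) V \<theta>"
    unfolding has_eigenvalue_def using \<open>V \<noteq> {}\<close> pos ey by (metis less_irrefl ex_in_conv)
  moreover have "\<mu> \<le> \<theta>" if "has_eigenvalue (dist_mat E) V \<mu>" for \<mu>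
    by (rule eigenvalue_le_of_positive_eigenvector[OF fin _ pos ey that]) (simp add: dist_mat_def)
  ultimately show ?thesis
    unfolding lambda1_dist_eq_Max
    using finite_eigenvalues[of V "dist_mat E"] fin dist_mat_sym[of E, OF sym]
    by (intro Max_eqI) auto
qed

lemma lambda1_dist_ge_dominated:
  assumes fin: "finite V" and sym: "\<And>a b. E a b \<Longrightarrow> E b a" and "V \<noteq> {}"
    and le: "\<And>u w. u \<in> V \<Longrightarrow> w \<in> V \<Longrightarrow> B u w \<le> dist_mat E u w"
    and pos: "\<And>u. u \<in> V \<Longrightarrow> 0 < y u"
    and ey: "\<And>u. u \<in> V \<Longrightarrow> (\<Sum>w\<in>V. B u w * y w) = t * y u"
  shows "t \<le> lambda1_dist V E"
    and "p \<in> V \<Longrightarrow> q \<in> V \<Longrightarrow> B p q < dist_mat E p q \<Longrightarrow> t < lambda1_dist V E"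
proof -
  obtain v where "v \<in> V" using \<open>V \<noteq> {}\<close> by blast
  then have ny: "0 < sq_norm V y" using sq_norm_pos[OF fin] pos by (metis less_irrefl)
  have "quad_form B V y = (\<Sum>u\<in>V. t * (y u)\<^sup>2)"
    unfolding quad_form_def mat_vec_def by (intro sum.cong refl) (simp add: ey power2_eq_square)
  then have qB: "quad_form B V y = t * sq_norm V y"
    by (simp add: sq_norm_def sum_distrib_left)
  define g where "g u w = (dist_mat E u w - B u w) * y u * y w" for u w
  have g_nonneg: "0 \<le> g u w" if "u \<in> V" "w \<in> V" for u w
    using le[OF that] pos[OF that(1)] pos[OF that(2)] by (simp add: g_def)
  have gap: "quad_form (dist_mat E) V y - quad_form B V y = (\<Sum>u\<in>V. \<Sum>w\<in>V. g u w)"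
    unfolding quad_form_double_sum g_def by (simp add: sum_subtractf[symmetric] algebra_simps)
  have ray: "quad_form (dist_mat E) V y \<le> lambda1_dist V E * sq_norm V y"
    by (rule quad_form_le_lambda1_dist[OF fin sym ny])
  have "0 \<le> (\<Sum>u\<in>V. \<Sum>w\<in>V. g u w)" using g_nonneg by (intro sum_nonneg) auto
  then have "t * sq_norm V y \<le> lambda1_dist V E * sq_norm V y" using ray gap qB by linarith
  then show "t \<le> lambda1_dist V E" using ny by (simp add: mult_le_cancel_right)
  assume p: "p \<in> V" and q: "q \<in> V" and lt: "B p q < dist_mat E p q"
  have "0 < g p q" using lt pos[OF p] pos[OF q] by (simp add: g_def)
  also have "g p q \<le> (\<Sum>w\<in>V. g p w)" using fin q g_nonneg p by (intro member_le_sum) auto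
  also have "\<dots> \<le> (\<Sum>u\<in>V. \<Sum>w\<in>V. g u w)"
    using fin p g_nonneg by (intro member_le_sum[of p V "\<lambda>u. \<Sum>w\<in>V. g u w"]) (auto intro: sum_nonneg)
  finally have "t * sq_norm V y < lambda1_dist V E * sq_norm V y" using ray gap qB by linarith
  then show "t < lambda1_dist V E" using ny by (simp add: mult_less_cancel_right)
qed

lemma simple_graph_finite: "simple_graph V E \<Longrightarrow> finite V"
  by (simp add: simple_graph_def)

lemma simple_graph_sym: "simple_graph V E \<Longrightarrow> E a b \<Longrightarrow> E b a"
  by (simp add: simple_graph_def)

lemma simple_graph_in: "simple_graph V E \<Longrightarrow> E a b \<Longrightarrow> a \<in> V \<and> b \<in> V"
  by (simp add: simple_graph_def)

lemma simple_graph_irrefl: "simple_graph V E \<Longrightarrow> \<not> E a a"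
  by (simp add: simple_graph_def)

lemma connected_graph_has_neighbour:
  assumes "simple_graph V E" "connected_graph V E" "v \<in> V" "u \<in> V" "u \<noteq> v"
  obtains y where "E v y"
proof -
  have "E\<^sup>*\<^sup>* v u" using assms(2-4) unfolding connected_graph_def by blast
  then show ?thesis using that assms(5) by (cases rule: converse_rtranclpE) auto
qed

section \<open>Barriers and the components of G - S\<close>

lemma bt_value_empty:
  assumes simple: "simple_graph V E" and conn: "connected_graph V E"
    and "even (card V)" and "2 \<le> card V"
  shows "bt_value k V E {} = 0"
proof -
  have "\<exists>w. E v w" if v: "v \<in> V" for v
  proof -
    have "\<not> V \<subseteq> {v}" using \<open>2 \<le> card V\<close> card_mono[of "{v}" V] by auto
    then obtain u where "u \<in> V" "u \<noteq> v" by blast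
    then show ?thesis using connected_graph_has_neighbour[OF simple conn v] by metis
  qed
  then have no_isolated: "{v \<in> V. \<forall>w\<in>V. \<not> E v w} = {}" using simple_graph_in[OF simple] by blast
  have "isolated_count V E = 0" unfolding isolated_count_def no_isolated by simp
  moreover have "components V E = {V}"
  proof -
    have "{w \<in> V. E\<^sup>*\<^sup>* v w} = V" if "v \<in> V" for v
      using conn that unfolding connected_graph_def by blast
    then have "components V E = (\<lambda>v. V) ` V" unfolding components_def by (intro image_cong) auto
    then show ?thesis using conn by (auto simp: connected_graph_def)
  qed
  then have "odd_count V E = 0" using \<open>even (card V)\<close> by (simp add: odd_count_def)
  moreover have "del_edges E {} = E" by (simp add: del_edges_def fun_eq_iff)
  ultimately show ?thesis unfolding bt_value_def Let_def by simp
qed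

lemma bt_value_le_def_k:
  assumes "finite V" "S \<subseteq> V"
  shows "bt_value k V E S \<le> def_k k V E"
proof -
  have "{bt_value k V E S | S. S \<subseteq> V} = bt_value k V E ` Pow V" by auto
  then have "finite {bt_value k V E S | S. S \<subseteq> V}" using assms(1) by simp
  then show ?thesis unfolding def_k_def using assms(2) by (intro Max_ge) auto
qed

text \<open>Since the empty set has value 0, a nonempty barrier has nonnegative value.\<close>
lemma nonneg_barrier_if_not_GBC:
  assumes simple: "simple_graph V E" and conn: "connected_graph V E"
    and "even (card V)" and "2 \<le> card V" and "\<not> GBC k V E"
  obtains S where "S \<noteq> {}" "S \<subseteq> V" "0 \<le> bt_value k V E S"
proof -
  obtain S where "S \<noteq> {}" "k_barrier k V E S"
    using assms(3,5) conn unfolding GBC_def by blast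
  moreover have "bt_value k V E {} \<le> def_k k V E"
    using bt_value_le_def_k[OF simple_graph_finite[OF simple]] by blast
  ultimately show ?thesis
    using that bt_value_empty[OF simple conn assms(3,4)] unfolding k_barrier_def by auto
qed

definition pendant_at :: "'a set \<Rightarrow> ('a \<Rightarrow> 'a \<Rightarrow> bool) \<Rightarrow> 'a \<Rightarrow> 'a \<Rightarrow> bool" where
  "pendant_at V E v w \<longleftrightarrow> v \<in> V \<and> w \<in> V \<and> v \<noteq> w \<and> (\<forall>x. E w x \<longleftrightarrow> x = v)"

locale vertex_deletion =
  fixes V :: "'a set" and E :: "'a \<Rightarrow> 'a \<Rightarrow> bool" and S :: "'a set"
  assumes simple: "simple_graph V E" and S_subset: "S \<subseteq> V"
begin

definition "W = V - S"
definition "E' = del_edges E S"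
definition "component u = {w \<in> W. E'\<^sup>*\<^sup>* u w}"
definition "isolated = {v \<in> W. \<forall>w\<in>W. \<not> E' v w}"
definition "odd_comps = {C \<in> component ` W. odd (card C) \<and> 3 \<le> card C}"
text \<open>Ordered pairs in different components of G - S; they are at distance at least 2 in G.\<close>
definition "far_pairs = Sigma W (\<lambda>u. W - component u)"

lemma finite_V: "finite V"
  using simple by (rule simple_graph_finite)

lemma finite_W: "finite W"
  using finite_V by (simp add: W_def)

lemma card_W: "card W + card S = card V"
  using finite_V S_subset by (simp add: W_def card_Diff_subset finite_subset card_mono)

lemma E'_in_W: "E' a b \<Longrightarrow> a \<in> W \<and> b \<in> W"
  using simple_graph_in[OF simple] by (auto simp: E'_def del_edges_def W_def)

lemma E'_sym: "E' a b \<Longrightarrow> E' b a"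
  using simple_graph_sym[OF simple] by (auto simp: E'_def del_edges_def)

lemma E'_iff: "a \<in> W \<Longrightarrow> b \<in> W \<Longrightarrow> E' a b \<longleftrightarrow> E a b"
  by (simp add: E'_def del_edges_def W_def)

lemma reach_sym: "E'\<^sup>*\<^sup>* a b \<Longrightarrow> E'\<^sup>*\<^sup>* b a"
proof (induction rule: rtranclp_induct)
  case (step y z)
  then show ?case using E'_sym[of y z] converse_rtranclp_into_rtranclp[of E' z y a] by blast
qed simp

lemma component_subset: "component u \<subseteq> W"
  by (auto simp: component_def)

lemma component_self: "u \<in> W \<Longrightarrow> u \<in> component u"
  by (simp add: component_def)

lemma component_eq: "y \<in> component x \<Longrightarrow> component y = component x"
  unfolding component_def using reach_sym by (auto intro: rtranclp_trans)

lemma components_disjoint: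
  "C1 \<in> component ` W \<Longrightarrow> C2 \<in> component ` W \<Longrightarrow> C1 \<noteq> C2 \<Longrightarrow> C1 \<inter> C2 = {}"
  using component_eq by blast

lemma component_isolated: "u \<in> isolated \<Longrightarrow> component u = {u}"
proof -
  assume u: "u \<in> isolated"
  have "w = u" if "E'\<^sup>*\<^sup>* u w" for w
    using that
  proof (cases rule: converse_rtranclpE)
    case (step y)
    then show ?thesis using u E'_in_W by (auto simp: isolated_def)
  qed simp
  then show ?thesis using u by (auto simp: component_def isolated_def)
qed

lemma isolated_subset: "isolated \<subseteq> W"
  by (auto simp: isolated_def)

lemma isolated_count_eq: "isolated_count W E' = card isolated"
  by (simp add: isolated_count_def isolated_def)

lemma odd_count_eq: "odd_count W E' = card odd_comps"
  by (simp add: odd_count_def odd_comps_def components_def component_def)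

lemma bt_value_odd:
  "odd k \<Longrightarrow>
    bt_value k V E S = int (card odd_comps) + int k * int (card isolated) - int k * int (card S)"
  unfolding bt_value_def Let_def using isolated_count_eq odd_count_eq by (simp add: W_def E'_def)

lemma odd_comp_subset: "C \<in> odd_comps \<Longrightarrow> C \<subseteq> W - isolated"
  using component_subset component_eq component_isolated
  by (fastforce simp: odd_comps_def)

lemma finite_odd_comps: "finite odd_comps"
  using finite_W by (auto simp: odd_comps_def)

lemma card_Union_odd_comps:
  assumes "G \<subseteq> odd_comps"
  shows "3 * card G \<le> card (\<Union>G)"
proof -
  have "finite G" using assms finite_odd_comps finite_subset by blast
  moreover have "\<forall>C\<in>G. finite C" using assms odd_comp_subset finite_W finite_subset by blast
  moreover have "pairwise disjnt G"
  proof (rule pairwiseI)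
    fix C1 C2 assume "C1 \<in> G" "C2 \<in> G" "C1 \<noteq> C2"
    moreover have "C1 \<in> component ` W" "C2 \<in> component ` W"
      using assms \<open>C1 \<in> G\<close> \<open>C2 \<in> G\<close> by (auto simp: odd_comps_def)
    ultimately show "disjnt C1 C2" using components_disjoint by (simp add: disjnt_def)
  qed
  ultimately have "card (\<Union>G) = (\<Sum>C\<in>G. card C)" by (simp add: card_Union_disjoint)
  also have "(\<Sum>C\<in>G. card C) \<ge> (\<Sum>C\<in>G. 3)" using assms by (intro sum_mono) (auto simp: odd_comps_def)
  finally show ?thesis by simp
qed

lemma card_odd_comps_isolated_le: "3 * card odd_comps + card isolated \<le> card W"
proof -
  have "3 * card odd_comps \<le> card (\<Union>odd_comps)" by (rule card_Union_odd_comps) simp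
  also have "\<dots> \<le> card (W - isolated)" using odd_comp_subset finite_W by (intro card_mono) auto
  also have "\<dots> = card W - card isolated"
    using isolated_subset finite_W by (simp add: card_Diff_subset finite_subset)
  finally show ?thesis using card_mono[OF finite_W isolated_subset] by linarith
qed

lemma card_far_pairs: "card far_pairs = (\<Sum>u\<in>W. card (W - component u))"
  unfolding far_pairs_def using finite_W by (simp add: card_SigmaI)

text \<open>An isolated vertex is far from the other w - 1 vertices of W, and every other vertex is
  far from all i isolated ones.\<close>
lemma card_far_pairs_ge_isolated:
  "int (card isolated) * (2 * int (card W) - int (card isolated) - 1) \<le> int (card far_pairs)"
proof -
  let ?i = "card isolated" and ?w = "card W"
  have fin_I: "finite isolated" using finite_W isolated_subset finite_subset by blast
  have "card far_pairs =
      (\<Sum>u\<in>isolated. card (W - component u)) + (\<Sum>u\<in>W - isolated. card (W - component u))"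
    unfolding card_far_pairs using sum.subset_diff[OF isolated_subset finite_W]
      by (simp add: add.commute)
  moreover have "(\<Sum>u\<in>isolated. card (W - component u)) = (\<Sum>u\<in>isolated. ?w - 1)"
  proof (intro sum.cong refl)
    fix u assume "u \<in> isolated"
    then have "W - component u = W - {u}" "u \<in> W" using component_isolated isolated_subset by auto
    then show "card (W - component u) = ?w - 1" using finite_W by simp
  qed
  moreover have "?i \<le> card (W - component u)" if "u \<in> W - isolated" for u
  proof -
    have "x \<notin> component u" if "x \<in> isolated" for x
      using component_eq[of x u] component_isolated[OF that] component_self[of u]
        \<open>u \<in> W - isolated\<close> that
      by auto
    then have "isolated \<subseteq> W - component u" using isolated_subset by blast
    then show ?thesis using finite_W by (intro card_mono) auto
  qed
  then have "(\<Sum>u\<in>W - isolated. ?i) \<le> (\<Sum>u\<in>W - isolated. card (W - component u))" by (rule sum_mono)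
  moreover have "card (W - isolated) = ?w - ?i" by (rule card_Diff_subset[OF fin_I isolated_subset])
  ultimately have "?i * (?w - 1) + (?w - ?i) * ?i \<le> card far_pairs" by (simp add: mult.commute)
  moreover have "?i \<le> ?w" by (rule card_mono[OF finite_W isolated_subset])
  ultimately have "int (?i * (?w - 1) + (?w - ?i) * ?i) \<le> int (card far_pairs)"
    by linarith
  moreover have "int (?i * (?w - 1) + (?w - ?i) * ?i) = int ?i * (2 * int ?w - int ?i - 1)"
  proof (cases "?w = 0")
    case False
    then have "int (?w - 1) = int ?w - 1" "int (?w - ?i) = int ?w - int ?i"
      using \<open>?i \<le> ?w\<close> by (simp_all add: of_nat_diff)
    then show ?thesis by (simp only: of_nat_add of_nat_mult) (simp add: algebra_simps)
  qed (use \<open>?i \<le> ?w\<close> in simp)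
  ultimately show ?thesis by simp
qed

lemma card_far_pairs_ge_odd_comps:
  assumes "3 \<le> card odd_comps"
  shows "6 * card W \<le> card far_pairs"
proof -
  have "6 \<le> card (W - component u)" if u: "u \<in> W" for u
  proof -
    define G where "G = odd_comps - {component u}"
    have "card odd_comps - 1 \<le> card G" unfolding G_def
      using diff_card_le_card_Diff[of "{component u}" odd_comps] by simp
    then have "6 \<le> card (\<Union>G)" using card_Union_odd_comps[of G] assms by (auto simp: G_def)
    also have "\<dots> \<le> card (W - component u)"
    proof (intro card_mono)
      show "\<Union>G \<subseteq> W - component u"
      proof
        fix y assume "y \<in> \<Union>G"
        then obtain C where C: "C \<in> odd_comps" "C \<noteq> component u" "y \<in> C" by (auto simp: G_def)
        then have "C \<inter> component u = {}"
          using components_disjoint[of C "component u"] u by (auto simp: odd_comps_def)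
        then show "y \<in> W - component u" using C odd_comp_subset by blast
      qed
    qed (use finite_W in simp)
    finally show ?thesis .
  qed
  then have "(\<Sum>u\<in>W. 6) \<le> card far_pairs" unfolding card_far_pairs by (intro sum_mono)
  then show ?thesis by (simp add: mult.commute)
qed

lemma far_pairs_nonadjacent: "(u, w) \<in> far_pairs \<Longrightarrow> u \<in> V \<and> w \<in> V \<and> u \<noteq> w \<and> \<not> E u w"
  using E'_iff component_self by (auto simp: far_pairs_def component_def W_def)

lemma lambda1_ge_far_pairs:
  assumes conn: "connected_graph V E"
  shows "real (card V) - 1 + real (card far_pairs) / real (card V) \<le> lambda1_dist V E"
proof -
  let ?n = "real (card V)"
  have "card V \<noteq> 0" using conn finite_V by (simp add: connected_graph_def)
  have lb: "of_bool (u \<noteq> w) + of_bool ((u, w) \<in> far_pairs) \<le> dist_mat E u w"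
    if "u \<in> V" "w \<in> V" for u w
    using dist_mat_ge_1[OF conn that] dist_mat_ge_2[OF conn that] far_pairs_nonadjacent[of u w]
    by (cases "u = w") (auto simp: dist_mat_def)
  have "(\<Sum>u\<in>V. \<Sum>w\<in>V. of_bool (u \<noteq> w) :: real) = ?n * (?n - 1)"
  proof -
    have "(\<Sum>w\<in>V. of_bool (u \<noteq> w) :: real) = ?n - 1" if "u \<in> V" for u
    proof -
      have "V \<inter> {w. u \<noteq> w} = V - {u}" by auto
      moreover have "0 < card V" using finite_V that card_gt_0_iff by blast
      ultimately show ?thesis using finite_V that
        by (simp add: sum_of_bool_eq card_Diff_singleton of_nat_diff)
    qed
    then show ?thesis by simp
  qed
  moreover have "(\<Sum>u\<in>V. \<Sum>w\<in>V. of_bool ((u, w) \<in> far_pairs) :: real) = real (card far_pairs)"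
  proof -
    have "far_pairs \<subseteq> V \<times> V" using far_pairs_nonadjacent by auto
    then have "(V \<times> V) \<inter> {p. p \<in> far_pairs} = far_pairs" by auto
    moreover have "(\<Sum>u\<in>V. \<Sum>w\<in>V. of_bool ((u, w) \<in> far_pairs) :: real)
        = (\<Sum>p\<in>V \<times> V. of_bool (p \<in> far_pairs))"
      by (simp add: sum.cartesian_product)
    ultimately show ?thesis using finite_V by (simp only: sum_of_bool_eq finite_cartesian_product)
  qed
  moreover have "(\<Sum>u\<in>V. \<Sum>w\<in>V. of_bool (u \<noteq> w) + of_bool ((u, w) \<in> far_pairs))
      \<le> (\<Sum>u\<in>V. \<Sum>w\<in>V. dist_mat E u w)"
    using lb by (intro sum_mono) auto
  ultimately have "?n * (?n - 1) + real (card far_pairs) \<le> quad_form (dist_mat E) V (\<lambda>_. 1)"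
    unfolding quad_form_double_sum by (simp add: sum.distrib)
  also have "\<dots> \<le> lambda1_dist V E * ?n"
    using quad_form_le_lambda1_dist[OF finite_V simple_graph_sym[OF simple], where y = "\<lambda>_. 1"]
      \<open>card V \<noteq> 0\<close> by (simp add: sq_norm_def)
  finally show ?thesis using \<open>card V \<noteq> 0\<close> by (simp add: field_simps)
qed

lemma barrier_cases:
  assumes "odd k" "3 \<le> k" "S \<noteq> {}" "0 \<le> bt_value k V E S"
  obtains (many_odd_comps) "card isolated < card S" "3 \<le> card odd_comps" "card S + 8 \<le> card W"
  | (many_isolated) "card S \<le> card isolated" "2 \<le> card isolated"
  | (pendant) "card isolated = 1" "card S = 1"
proof -
  have "1 \<le> card S"
    using assms(3) finite_V S_subset by (metis One_nat_def Suc_leI card_gt_0_iff finite_subset)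
  have bt: "int k * int (card S) \<le> int (card odd_comps) + int k * int (card isolated)"
    using assms(4) bt_value_odd[OF assms(1)] by simp
  show ?thesis
  proof (cases "card isolated < card S")
    case True
    \<comment> \<open>With d = s - i, the barrier inequality forces at least 3d odd components, of at
      least 3 vertices each.\<close>
    define d where "d = card S - card isolated"
    have "int k * int d \<le> int (card odd_comps)"
      using bt True by (simp add: d_def of_nat_diff algebra_simps)
    moreover have "3 * int d \<le> int k * int d" using assms(2) by (intro mult_right_mono) auto
    ultimately have "3 * d \<le> card odd_comps" by linarith
    then show ?thesis
      using that(1) True card_odd_comps_isolated_le by (simp add: d_def)
  next
    case False
    then show ?thesis using that(2,3) \<open>1 \<le> card S\<close> by linarith
  qed
qed

lemma isolated_neighbours_in_S:
  assumes "w \<in> isolated" "E w x"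
  shows "x \<in> S"
proof (rule ccontr)
  assume "x \<notin> S"
  then have "x \<in> W" using simple_graph_in[OF simple assms(2)] by (simp add: W_def)
  then show False using assms E'_iff isolated_subset by (auto simp: isolated_def)
qed

lemma pendant_if_single_isolated:
  assumes conn: "connected_graph V E" and "card isolated = 1" "card S = 1"
  obtains v w where "pendant_at V E v w"
proof -
  obtain w where I: "isolated = {w}" using assms(2) card_1_singletonE by blast
  obtain v where S: "S = {v}" using assms(3) card_1_singletonE by blast
  have "w \<in> W" using I isolated_subset by blast
  then have "w \<in> V - S" by (simp add: W_def)
  then have w: "w \<in> V" "w \<noteq> v" using S by auto
  have v: "v \<in> V" using S S_subset by blast
  have only: "E w x \<Longrightarrow> x = v" for x using isolated_neighbours_in_S[of w x] I S by blast
  obtain y where "E w y" using connected_graph_has_neighbour[OF simple conn w(1) v] w(2) by metis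
  then have "E w v" using only by blast
  then show ?thesis using that only v w unfolding pendant_at_def by blast
qed

end

section \<open>The graph K_1 \<or> (K_{n-2} \<union> K_1)\<close>

text \<open>The distance matrix of K_1 \<or> (K_{n-2} \<union> K_1) with hub v and pendant vertex w,
  copied onto an arbitrary vertex set.\<close>
definition pendant_dist :: "'a \<Rightarrow> 'a \<Rightarrow> 'a \<Rightarrow> 'a \<Rightarrow> real" where
  "pendant_dist v w x y =
     (if x = y then 0 else if (x = w \<and> y \<noteq> v) \<or> (y = w \<and> x \<noteq> v) then 2 else 1)"

definition pendant_vec :: "'a \<Rightarrow> 'a \<Rightarrow> real \<Rightarrow> real \<Rightarrow> 'a \<Rightarrow> real" where
  "pendant_vec v w a c x = (if x = v then a else if x = w then c else 1)"

text \<open>The equations pendant_dist y = t y for y = pendant_vec v w a c, read off the rows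
  of v, of w and of the remaining vertices.\<close>
definition pendant_system :: "nat \<Rightarrow> real \<Rightarrow> real \<Rightarrow> real \<Rightarrow> bool" where
  "pendant_system n t a c \<longleftrightarrow> 0 < a \<and> 0 < c \<and> real n - 2 + c = t * a
     \<and> a + 2 * (real n - 2) = t * c \<and> a + (real n - 3) + 2 * c = t"

lemma sum_if_eq_0:
  fixes c :: real
  assumes "finite A" "u \<in> A"
  shows "(\<Sum>x\<in>A. if u = x then 0 else c) = (real (card A) - 1) * c"
proof -
  have "(\<Sum>x\<in>A. if u = x then 0 else c) = (\<Sum>x\<in>A - {u}. if u = x then 0 else c)"
    using sum.remove[OF assms, of "\<lambda>x. if u = x then 0 else c"] by simp
  also have "\<dots> = (\<Sum>x\<in>A - {u}. c)" by (rule sum.cong) auto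
  also have "\<dots> = real (card A - 1) * c" using assms by (simp add: card_Diff_singleton)
  also have "real (card A - 1) = real (card A) - 1"
  proof -
    have "0 < card A" using assms card_gt_0_iff by blast
    then show ?thesis by (simp add: of_nat_diff)
  qed
  finally show ?thesis .
qed

lemma pendant_dist_eigenvector:
  assumes fin: "finite V" and "v \<in> V" "w \<in> V" "v \<noteq> w" and "card V = n"
    and sys: "pendant_system n t a c" and u: "u \<in> V"
  shows "(\<Sum>x\<in>V. pendant_dist v w u x * pendant_vec v w a c x) = t * pendant_vec v w a c u"
proof -
  define R where "R = V - {v, w}"
  have "finite R" using fin by (simp add: R_def)
  have "card R = n - 2" using assms by (simp add: R_def card_Diff_subset)
  moreover have "2 \<le> n" using assms card_mono[OF fin, of "{v, w}"] by auto
  ultimately have card_R: "real (card R) = real n - 2" by simp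
  have split: "(\<Sum>x\<in>V. f x) = f v + f w + (\<Sum>x\<in>R. f x)" for f :: "'a \<Rightarrow> real"
  proof -
    have "(\<Sum>x\<in>V. f x) = f v + (\<Sum>x\<in>V - {v}. f x)" using assms by (simp add: sum.remove)
    also have "(\<Sum>x\<in>V - {v}. f x) = f w + (\<Sum>x\<in>V - {v} - {w}. f x)"
      using assms by (intro sum.remove) auto
    also have "V - {v} - {w} = R" by (auto simp: R_def)
    finally show ?thesis by simp
  qed
  consider "u = v" | "u = w" | "u \<in> R" using u by (auto simp: R_def)
  then show ?thesis
  proof cases
    case 1
    have "(\<Sum>x\<in>R. pendant_dist v w u x * pendant_vec v w a c x) = (\<Sum>x\<in>R. 1)"
      by (intro sum.cong refl) (use 1 assms in \<open>auto simp: pendant_dist_def pendant_vec_def R_def\<close>)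
    then show ?thesis
      unfolding split using 1 assms card_R
        by (simp add: pendant_dist_def pendant_vec_def pendant_system_def)
  next
    case 2
    have "(\<Sum>x\<in>R. pendant_dist v w u x * pendant_vec v w a c x) = (\<Sum>x\<in>R. 2)"
      by (intro sum.cong refl) (use 2 assms in \<open>auto simp: pendant_dist_def pendant_vec_def R_def\<close>)
    then show ?thesis
      unfolding split using 2 assms card_R
        by (simp add: pendant_dist_def pendant_vec_def pendant_system_def)
  next
    case 3
    have "(\<Sum>x\<in>R. pendant_dist v w u x * pendant_vec v w a c x) = (\<Sum>x\<in>R. if u = x then 0 else 1)"
      by (intro sum.cong refl) (use 3 assms in \<open>auto simp: pendant_dist_def pendant_vec_def R_def\<close>)
    also have "\<dots> = real n - 3" using sum_if_eq_0[OF \<open>finite R\<close> 3, of 1] card_R by simp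
    finally show ?thesis
      unfolding split using 3 assms
        by (auto simp: pendant_dist_def pendant_vec_def pendant_system_def R_def)
  qed
qed

lemma dist_mat_ge_pendant_dist:
  assumes simple: "simple_graph V E" and conn: "connected_graph V E"
    and pend: "pendant_at V E v w" and xy: "x \<in> V" "y \<in> V"
  shows "pendant_dist v w x y \<le> dist_mat E x y"
proof (cases "x = y")
  case False
  show ?thesis
  proof (cases "(x = w \<and> y \<noteq> v) \<or> (y = w \<and> x \<noteq> v)")
    case True
    then have "\<not> E x y" using pend simple_graph_sym[OF simple, of x y]
      by (auto simp: pendant_at_def)
    then have "2 \<le> dist_mat E x y" using False dist_mat_ge_2[OF conn xy] by blast
    moreover have "pendant_dist v w x y = 2" using True False by (simp add: pendant_dist_def)
    ultimately show ?thesis by simp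
  next
    case far: False
    then have "pendant_dist v w x y = 1" using False by (simp add: pendant_dist_def)
    then show ?thesis using False dist_mat_ge_1[OF conn xy] by simp
  qed
qed (simp add: pendant_dist_def dist_mat_def)

lemma K1_join_Kn2_K1_iff:
  "x < n \<Longrightarrow> y < n \<Longrightarrow>
    K1_join_Kn2_K1 n x y \<longleftrightarrow> x \<noteq> y \<and> (x = 0 \<or> y = 0 \<or> (x \<noteq> n - 1 \<and> y \<noteq> n - 1))"
  unfolding K1_join_Kn2_K1_def by auto

lemma graph_iso_K1_join_Kn2_K1:
  assumes simple: "simple_graph V E" and "card V = n" and pend: "pendant_at V E v w"
    and adj: "\<And>p q. p \<in> V \<Longrightarrow> q \<in> V \<Longrightarrow> p \<noteq> q \<Longrightarrow> p \<noteq> w \<Longrightarrow> q \<noteq> w \<Longrightarrow> E p q"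
  shows "graph_iso V E {0..<n} (K1_join_Kn2_K1 n)"
proof -
  have fin: "finite V" using simple by (rule simple_graph_finite)
  have vw: "v \<in> V" "w \<in> V" "v \<noteq> w" using pend by (auto simp: pendant_at_def)
  define R where "R = V - {v, w}"
  have "finite R" using fin by (simp add: R_def)
  moreover have "card R = card {1..<n - 1}" using fin vw \<open>card V = n\<close>
    by (simp add: R_def card_Diff_subset)
  ultimately obtain g where g: "bij_betw g R {1..<n - 1}"
    using finite_same_card_bij[OF _ finite_atLeastLessThan] by blast
  have "2 \<le> n" using fin vw \<open>card V = n\<close> card_mono[of V "{v, w}"] by auto
  define f where "f x = (if x = v then 0 else if x = w then n - 1 else g x)" for x
  have "bij_betw f R {1..<n - 1}"
    using g by (rule bij_betw_cong[THEN iffD1, rotated]) (auto simp: f_def R_def)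
  moreover have "bij_betw f {v, w} {0, n - 1}"
    using vw \<open>2 \<le> n\<close> by (auto simp: bij_betw_def f_def)
  ultimately have "bij_betw f ({v, w} \<union> R) ({0, n - 1} \<union> {1..<n - 1})"
    by (intro bij_betw_combine) (auto simp: R_def)
  moreover have "{v, w} \<union> R = V" "{0, n - 1} \<union> {1..<n - 1} = {0..<n}"
    using vw \<open>2 \<le> n\<close> by (auto simp: R_def)
  ultimately have bij: "bij_betw f V {0..<n}" by simp
  have f_R: "f x \<in> {1..<n - 1}" if "x \<in> R" for x
    using that bij_betwE[OF g] by (auto simp: f_def R_def)
  have f_0: "f x = 0 \<longleftrightarrow> x = v" and f_last: "f x = n - 1 \<longleftrightarrow> x = w" if "x \<in> V" for x
    using that f_R[of x] vw \<open>2 \<le> n\<close> by (auto simp: f_def R_def)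
  have "E x y \<longleftrightarrow> K1_join_Kn2_K1 n (f x) (f y)" if xy: "x \<in> V" "y \<in> V" for x y
  proof -
    have "E x y \<longleftrightarrow> x \<noteq> y \<and> (x = v \<or> y = v \<or> (x \<noteq> w \<and> y \<noteq> w))"
      using adj[OF xy] pend simple_graph_irrefl[OF simple] simple_graph_sym[OF simple]
      by (auto simp: pendant_at_def)
    moreover have "f x < n" "f y < n" "f x = f y \<longleftrightarrow> x = y"
      using bij xy by (auto simp: bij_betw_def inj_on_eq_iff)
    ultimately show ?thesis
      using f_0[OF xy(1)] f_0[OF xy(2)] f_last[OF xy(1)] f_last[OF xy(2)]
      by (simp add: K1_join_Kn2_K1_iff)
  qed
  then show ?thesis unfolding graph_iso_def using bij by blast
qed

lemma lambda1_ge_pendant_system: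
  assumes simple: "simple_graph V E" and conn: "connected_graph V E" and "card V = n"
    and pend: "pendant_at V E v w" and sys: "pendant_system n t a c"
  shows "t \<le> lambda1_dist V E"
    and "\<not> graph_iso V E {0..<n} (K1_join_Kn2_K1 n) \<Longrightarrow> t < lambda1_dist V E"
proof -
  have vw: "v \<in> V" "w \<in> V" "v \<noteq> w" using pend by (auto simp: pendant_at_def)
  note dominated = lambda1_dist_ge_dominated[OF simple_graph_finite[OF simple]
      simple_graph_sym[OF simple],
      where B = "pendant_dist v w" and y = "pendant_vec v w a c" and t = t]
  note hyps = vw dist_mat_ge_pendant_dist[OF simple conn pend]
    pendant_dist_eigenvector[OF simple_graph_finite[OF simple] vw \<open>card V = n\<close> sys]
  have pos: "0 < pendant_vec v w a c u" for u using sys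
    by (simp add: pendant_vec_def pendant_system_def)
  show "t \<le> lambda1_dist V E" by (rule dominated(1)) (use hyps pos in auto)
  assume "\<not> graph_iso V E {0..<n} (K1_join_Kn2_K1 n)"
  then obtain p q where pq: "p \<in> V" "q \<in> V" "p \<noteq> q" "p \<noteq> w" "q \<noteq> w" "\<not> E p q"
    using graph_iso_K1_join_Kn2_K1[OF simple \<open>card V = n\<close> pend] by blast
  then have "pendant_dist v w p q < dist_mat E p q"
    using dist_mat_ge_2[OF conn pq(1-3,6)] by (simp add: pendant_dist_def)
  then show "t < lambda1_dist V E" by (rule dominated(2)[rotated -1]) (use hyps pos pq in auto)
qed

lemma dist_mat_K1_join_Kn2_K1:
  assumes "x < n" "y < n"
  shows "dist_mat (K1_join_Kn2_K1 n) x y = pendant_dist 0 (n - 1) x y"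
proof -
  note adj = K1_join_Kn2_K1_iff[OF assms]
  consider "x = y" | "x \<noteq> y" "K1_join_Kn2_K1 n x y" | "x \<noteq> y" "\<not> K1_join_Kn2_K1 n x y" by blast
  then show ?thesis
  proof cases
    case 2
    then have "gdist (K1_join_Kn2_K1 n) x y = 1" using gdist_eq_1[of "K1_join_Kn2_K1 n" x y] by simp
    moreover have "\<not> ((x = n - 1 \<and> y \<noteq> 0) \<or> (y = n - 1 \<and> x \<noteq> 0))"
      using 2 adj assms by (cases "x = 0"; cases "y = 0") auto
    ultimately show ?thesis using 2 by (simp add: dist_mat_def pendant_dist_def)
  next
    case 3
    then have c: "x \<noteq> 0" "y \<noteq> 0" "x = n - 1 \<or> y = n - 1" using adj by simp_all
    have "K1_join_Kn2_K1 n x 0" "K1_join_Kn2_K1 n 0 y"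
      using c assms by (simp_all add: K1_join_Kn2_K1_def)
    then have "gdist (K1_join_Kn2_K1 n) x y = 2" using 3 gdist_eq_2[of "K1_join_Kn2_K1 n" x 0 y]
      by simp
    then show ?thesis using 3 c by (auto simp: dist_mat_def pendant_dist_def)
  qed (simp add: dist_mat_def pendant_dist_def)
qed

lemma lambda1_K1_join_Kn2_K1:
  assumes "2 \<le> n" and sys: "pendant_system n t a c"
  shows "lambda1_dist {0..<n} (K1_join_Kn2_K1 n) = t"
proof (rule lambda1_dist_eq_positive_eigenvalue[where y = "pendant_vec 0 (n - 1) a c"])
  show "K1_join_Kn2_K1 n x y \<Longrightarrow> K1_join_Kn2_K1 n y x" for x y by (auto simp: K1_join_Kn2_K1_def)
  show "0 < pendant_vec 0 (n - 1) a c u" for u using sys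
    by (simp add: pendant_vec_def pendant_system_def)
  fix u assume u: "u \<in> {0..<n}"
  have "(\<Sum>x\<in>{0..<n}. dist_mat (K1_join_Kn2_K1 n) u x * pendant_vec 0 (n - 1) a c x)
      = (\<Sum>x\<in>{0..<n}. pendant_dist 0 (n - 1) u x * pendant_vec 0 (n - 1) a c x)"
    using u assms by (intro sum.cong refl) (simp add: dist_mat_K1_join_Kn2_K1)
  also have "\<dots> = t * pendant_vec 0 (n - 1) a c u"
    by (rule pendant_dist_eigenvector) (use assms u in auto)
  finally show "(\<Sum>x\<in>{0..<n}. dist_mat (K1_join_Kn2_K1 n) u x * pendant_vec 0 (n - 1) a c x)
      = t * pendant_vec 0 (n - 1) a c u" .
qed (use assms in auto)

section \<open>The graph S_{n,s}\<close>

text \<open>The distance matrix of S_{n,s} with clique S and independent set V - S.\<close>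
definition split_dist :: "'a set \<Rightarrow> 'a \<Rightarrow> 'a \<Rightarrow> real" where
  "split_dist S x y = (if x = y then 0 else if x \<notin> S \<and> y \<notin> S then 2 else 1)"

definition split_vec :: "'a set \<Rightarrow> real \<Rightarrow> 'a \<Rightarrow> real" where
  "split_vec S b x = (if x \<in> S then 1 else b)"

text \<open>The equations split_dist y = t y for y = split_vec S b, read off the rows of S and of V - S,
  when |S| = |V - S| = s.\<close>
definition split_system :: "nat \<Rightarrow> real \<Rightarrow> real \<Rightarrow> bool" where
  "split_system s t b \<longleftrightarrow> 0 < b \<and> real s - 1 + real s * b = t \<and> real s + 2 * (real s - 1) * b = t * b"

lemma split_dist_eigenvector:
  assumes fin: "finite V" and S: "S \<subseteq> V" "card S = s" "card (V - S) = s"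
    and sys: "split_system s t b" and u: "u \<in> V"
  shows "(\<Sum>x\<in>V. split_dist S u x * split_vec S b x) = t * split_vec S b u"
proof -
  have "finite S" using fin S(1) finite_subset by blast
  have split: "(\<Sum>x\<in>V. f x) = (\<Sum>x\<in>S. f x) + (\<Sum>x\<in>V - S. f x)" for f :: "'a \<Rightarrow> real"
    using sum.subset_diff[OF S(1) fin, of f] by (simp add: add.commute)
  show ?thesis
  proof (cases "u \<in> S")
    case True
    have "(\<Sum>x\<in>S. split_dist S u x * split_vec S b x) = (\<Sum>x\<in>S. if u = x then 0 else 1)"
      by (rule sum.cong) (auto simp: split_dist_def split_vec_def True)
    moreover have "(\<Sum>x\<in>V - S. split_dist S u x * split_vec S b x) = (\<Sum>x\<in>V - S. b)"
      by (rule sum.cong) (auto simp: split_dist_def split_vec_def True)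
    ultimately show ?thesis
      unfolding split using sum_if_eq_0[OF \<open>finite S\<close> True] S sys True
      by (simp add: split_vec_def split_system_def)
  next
    case False
    then have "u \<in> V - S" using u by simp
    have "(\<Sum>x\<in>S. split_dist S u x * split_vec S b x) = (\<Sum>x\<in>S. 1)"
      by (rule sum.cong) (auto simp: split_dist_def split_vec_def False)
    moreover have "(\<Sum>x\<in>V - S. split_dist S u x * split_vec S b x)
        = (\<Sum>x\<in>V - S. if u = x then 0 else 2 * b)"
      by (rule sum.cong) (auto simp: split_dist_def split_vec_def False)
    ultimately show ?thesis
      unfolding split using sum_if_eq_0[OF _ \<open>u \<in> V - S\<close>] fin S sys False
      by (simp add: split_vec_def split_system_def algebra_simps)
  qed
qed

lemma dist_mat_ge_split_dist:
  assumes conn: "connected_graph V E"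
    and indep: "\<And>p q. p \<in> V - S \<Longrightarrow> q \<in> V - S \<Longrightarrow> \<not> E p q" and xy: "x \<in> V" "y \<in> V"
  shows "split_dist S x y \<le> dist_mat E x y"
proof (cases "x = y")
  case False
  show ?thesis
  proof (cases "x \<notin> S \<and> y \<notin> S")
    case True
    then have "2 \<le> dist_mat E x y" using False indep xy dist_mat_ge_2[OF conn xy] by blast
    then show ?thesis using True False by (simp add: split_dist_def)
  next
    case far: False
    then have "split_dist S x y = 1" using False by (simp add: split_dist_def)
    then show ?thesis using False dist_mat_ge_1[OF conn xy] by simp
  qed
qed (simp add: split_dist_def dist_mat_def)

lemma graph_iso_S_graph:
  assumes simple: "simple_graph V E" and "card V = n" and "n = 2 * s"
    and S: "S \<subseteq> V" "card S = s"
    and indep: "\<And>p q. p \<in> V - S \<Longrightarrow> q \<in> V - S \<Longrightarrow> \<not> E p q"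
    and adj: "\<And>p q. p \<in> V \<Longrightarrow> q \<in> V \<Longrightarrow> p \<noteq> q \<Longrightarrow> p \<in> S \<or> q \<in> S \<Longrightarrow> E p q"
  shows "graph_iso V E {0..<n} (S_graph n s)"
proof -
  have fin: "finite V" using simple by (rule simple_graph_finite)
  have "finite S" using fin S(1) finite_subset by blast
  have "card S = card {0..<s}" using S(2) by simp
  then obtain g1 where g1: "bij_betw g1 S {0..<s}"
    using finite_same_card_bij[OF \<open>finite S\<close> finite_atLeastLessThan] by blast
  have "card (V - S) = card {s..<n}" using assms fin \<open>finite S\<close> by (simp add: card_Diff_subset)
  then obtain g2 where g2: "bij_betw g2 (V - S) {s..<n}"
    using finite_same_card_bij[OF _ finite_atLeastLessThan] fin by blast
  define f where "f x = (if x \<in> S then g1 x else g2 x)" for x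
  have b1: "bij_betw f S {0..<s}" using g1
    by (rule bij_betw_cong[THEN iffD1, rotated]) (simp add: f_def)
  have b2: "bij_betw f (V - S) {s..<n}" using g2
    by (rule bij_betw_cong[THEN iffD1, rotated]) (simp add: f_def)
  have "bij_betw f (S \<union> (V - S)) ({0..<s} \<union> {s..<n})" by (rule bij_betw_combine[OF b1 b2]) auto
  moreover have "S \<union> (V - S) = V" "{0..<s} \<union> {s..<n} = {0..<n}" using S(1) \<open>n = 2 * s\<close> by auto
  ultimately have bij: "bij_betw f V {0..<n}" by simp
  have f_S: "f x < s \<longleftrightarrow> x \<in> S" if "x \<in> V" for x
  proof (cases "x \<in> S")
    case False
    then have "f x \<in> {s..<n}" using bij_betwE[OF b2] that by blast
    then show ?thesis using False by simp
  qed (use bij_betwE[OF b1] in auto)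
  have "E x y \<longleftrightarrow> S_graph n s (f x) (f y)" if xy: "x \<in> V" "y \<in> V" for x y
  proof -
    have "E x y \<longleftrightarrow> x \<noteq> y \<and> (x \<in> S \<or> y \<in> S)"
      using adj[OF xy] indep xy simple_graph_irrefl[OF simple] by blast
    moreover have "f x < n" "f y < n" "f x = f y \<longleftrightarrow> x = y"
      using bij xy by (auto simp: bij_betw_def inj_on_eq_iff)
    ultimately show ?thesis using f_S[OF xy(1)] f_S[OF xy(2)] by (simp add: S_graph_def)
  qed
  then show ?thesis unfolding graph_iso_def using bij by blast
qed

lemma lambda1_gt_split_system:
  assumes simple: "simple_graph V E" and conn: "connected_graph V E" and "card V = 2 * s"
    and S: "S \<subseteq> V" "card S = s"
    and indep: "\<And>p q. p \<in> V - S \<Longrightarrow> q \<in> V - S \<Longrightarrow> \<not> E p q"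
    and sys: "split_system s t b"
    and not_iso: "\<not> graph_iso V E {0..<2 * s} (S_graph (2 * s) s)"
  shows "t < lambda1_dist V E"
proof -
  have fin: "finite V" using simple by (rule simple_graph_finite)
  have "V \<noteq> {}" using conn by (simp add: connected_graph_def)
  have "card (V - S) = s" using assms fin by (simp add: card_Diff_subset finite_subset)
  note dominated = lambda1_dist_ge_dominated[OF fin simple_graph_sym[OF simple] \<open>V \<noteq> {}\<close>,
      where B = "split_dist S" and y = "split_vec S b" and t = t]
  note hyps = dist_mat_ge_split_dist[OF conn indep]
    split_dist_eigenvector[OF fin S \<open>card (V - S) = s\<close> sys]
  have pos: "0 < split_vec S b u" for u using sys by (simp add: split_vec_def split_system_def)
  obtain p q where pq: "p \<in> V" "q \<in> V" "p \<noteq> q" "p \<in> S \<or> q \<in> S" "\<not> E p q"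
    using not_iso graph_iso_S_graph[OF simple \<open>card V = 2 * s\<close> refl S indep] by blast
  then have "split_dist S p q < dist_mat E p q"
    using dist_mat_ge_2[OF conn pq(1-3,5)] by (auto simp: split_dist_def)
  then show ?thesis by (rule dominated(2)[rotated -1]) (use hyps pos pq in auto)
qed

lemma dist_mat_S_graph:
  assumes "1 \<le> s" "s \<le> n" "x < n" "y < n"
  shows "dist_mat (S_graph n s) x y = split_dist {0..<s} x y"
proof -
  consider "x = y" | "x \<noteq> y" "x < s \<or> y < s" | "x \<noteq> y" "\<not> (x < s \<or> y < s)" by blast
  then show ?thesis
  proof cases
    case 2
    then have "S_graph n s x y" using assms by (simp add: S_graph_def)
    then have "gdist (S_graph n s) x y = 1" using gdist_eq_1[of "S_graph n s" x y] 2 by simp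
    then show ?thesis using 2 by (auto simp: dist_mat_def split_dist_def)
  next
    case 3
    have "S_graph n s x 0" "S_graph n s 0 y" "\<not> S_graph n s x y"
      using assms 3 by (auto simp: S_graph_def)
    then have "gdist (S_graph n s) x y = 2" using gdist_eq_2[of "S_graph n s" x 0 y] 3 by simp
    then show ?thesis using 3 by (auto simp: dist_mat_def split_dist_def)
  qed (simp add: dist_mat_def split_dist_def)
qed

lemma lambda1_S_graph:
  assumes "1 \<le> s" and sys: "split_system s t b"
  shows "lambda1_dist {0..<2 * s} (S_graph (2 * s) s) = t"
proof (rule lambda1_dist_eq_positive_eigenvalue[where y = "split_vec {0..<s} b"])
  show "S_graph (2 * s) s x y \<Longrightarrow> S_graph (2 * s) s y x" for x y by (auto simp: S_graph_def)
  show "0 < split_vec {0..<s} b u" for u using sys by (simp add: split_vec_def split_system_def)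
  fix u assume u: "u \<in> {0..<2 * s}"
  have "(\<Sum>x\<in>{0..<2 * s}. dist_mat (S_graph (2 * s) s) u x * split_vec {0..<s} b x)
      = (\<Sum>x\<in>{0..<2 * s}. split_dist {0..<s} u x * split_vec {0..<s} b x)"
    using u assms by (intro sum.cong refl) (simp add: dist_mat_S_graph)
  also have "\<dots> = t * split_vec {0..<s} b u"
    by (rule split_dist_eigenvector) (use u sys in auto)
  finally show "(\<Sum>x\<in>{0..<2 * s}. dist_mat (S_graph (2 * s) s) u x * split_vec {0..<s} b x)
      = t * split_vec {0..<s} b u" .
qed (use assms in auto)

section \<open>Locating the spectral radii\<close>

text \<open>Solving the first two equations of pendant_system for a and c; the third one becomes
  pendant_char n t = 0.\<close>
definition pendant_a :: "nat \<Rightarrow> real \<Rightarrow> real" where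
  "pendant_a n t = (real n - 2) * (t + 2) / (t\<^sup>2 - 1)"

definition pendant_c :: "nat \<Rightarrow> real \<Rightarrow> real" where
  "pendant_c n t = (pendant_a n t + 2 * (real n - 2)) / t"

definition pendant_char :: "nat \<Rightarrow> real \<Rightarrow> real" where
  "pendant_char n t = pendant_a n t + (real n - 3) + 2 * pendant_c n t - t"

lemma pendant_system_root:
  assumes "3 \<le> n" "1 < lo" "lo \<le> hi" "0 \<le> pendant_char n lo" "pendant_char n hi \<le> 0"
  obtains t where "lo \<le> t" "t \<le> hi" "pendant_char n t = 0"
    "pendant_system n t (pendant_a n t) (pendant_c n t)"
proof -
  have "t\<^sup>2 \<noteq> 1" if "1 < t" for t :: real
  proof -
    have "1 < t\<^sup>2" using one_less_power[of t 2] that by simp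
    then show ?thesis by simp
  qed
  then have "continuous_on {lo..hi} (pendant_char n)"
    unfolding pendant_char_def[abs_def] pendant_c_def pendant_a_def
    using assms(2) by (intro continuous_intros) auto
  then obtain t where t: "lo \<le> t" "t \<le> hi" "pendant_char n t = 0"
    using IVT2'[of "pendant_char n" hi 0 lo] assms(3-5) by blast
  have "1 < t" using t assms(2) by simp
  then have "0 < t\<^sup>2 - 1" using one_less_power[of t 2] by simp
  have a: "0 < pendant_a n t" unfolding pendant_a_def
    using assms(1) \<open>1 < t\<close> \<open>0 < t\<^sup>2 - 1\<close> by (intro divide_pos_pos mult_pos_pos) auto
  have c: "0 < pendant_c n t" unfolding pendant_c_def
    using a assms(1) \<open>1 < t\<close> by (intro divide_pos_pos) auto
  have e2: "pendant_a n t + 2 * (real n - 2) = t * pendant_c n t"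
    unfolding pendant_c_def using \<open>1 < t\<close> by simp
  have "pendant_a n t * (t\<^sup>2 - 1) = (real n - 2) * (t + 2)"
    unfolding pendant_a_def using \<open>0 < t\<^sup>2 - 1\<close> by simp
  then have "t * (t * pendant_a n t - pendant_c n t) = t * (real n - 2)"
    using e2 by (simp add: algebra_simps power2_eq_square)
  then have e1: "real n - 2 + pendant_c n t = t * pendant_a n t" using \<open>1 < t\<close> by simp
  have e3: "pendant_a n t + (real n - 3) + 2 * pendant_c n t = t"
    using t(3) by (simp add: pendant_char_def)
  show ?thesis using that t a c e1 e2 e3 unfolding pendant_system_def by blast
qed

lemma pendant_char_lower:
  assumes "4 \<le> n"
  shows "0 < pendant_char n (real n - 1)"
proof -
  have sq: "(real n - 1)\<^sup>2 - 1 = real n * (real n - 2)"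
    by (simp add: power2_eq_square algebra_simps)
  have a: "pendant_a n (real n - 1) = (real n + 1) / real n"
    unfolding pendant_a_def sq using assms by (simp add: field_simps)
  then have "0 < pendant_a n (real n - 1)" using assms by simp
  moreover have "1 \<le> pendant_c n (real n - 1)"
    unfolding pendant_c_def using \<open>0 < pendant_a n (real n - 1)\<close> assms by (simp add: le_divide_eq)
  ultimately show ?thesis unfolding pendant_char_def by linarith
qed

lemma pendant_char_upper:
  assumes "4 \<le> n"
  shows "pendant_char n (real n + 2) < 0"
proof -
  have "6 * 6 \<le> (real n + 2) * (real n + 2)" using assms by (intro mult_mono) auto
  then have pos: "0 < (real n + 2)\<^sup>2 - 1" by (simp add: power2_eq_square)
  then have a: "pendant_a n (real n + 2) < 1"
    unfolding pendant_a_def using assms by (simp add: divide_less_eq power2_eq_square algebra_simps)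
  moreover have "0 \<le> pendant_a n (real n + 2)" unfolding pendant_a_def using pos assms by simp
  ultimately have "pendant_c n (real n + 2) < 2"
    unfolding pendant_c_def using assms by (simp add: divide_less_eq)
  then show ?thesis unfolding pendant_char_def using a by linarith
qed

lemma lambda1_K1_join_Kn2_K1_less:
  assumes "4 \<le> n" "real n - 1 \<le> hi" "pendant_char n hi < 0"
  shows "lambda1_dist {0..<n} (K1_join_Kn2_K1 n) < hi"
proof -
  obtain t where "t \<le> hi" "pendant_char n t = 0"
    "pendant_system n t (pendant_a n t) (pendant_c n t)"
    by (rule pendant_system_root[of n "real n - 1" hi])
      (use pendant_char_lower[of n] assms in auto)
  moreover have "t \<noteq> hi" using \<open>pendant_char n t = 0\<close> assms(3) by auto
  ultimately show ?thesis using lambda1_K1_join_Kn2_K1[of n] assms(1) by fastforce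
qed

lemma lambda1_K1_join_Kn2_K1_ge:
  assumes "4 \<le> n" "1 < lo" "lo \<le> real n + 2" "0 \<le> pendant_char n lo"
  shows "lo \<le> lambda1_dist {0..<n} (K1_join_Kn2_K1 n)"
proof -
  obtain t where "lo \<le> t" "pendant_system n t (pendant_a n t) (pendant_c n t)"
    by (rule pendant_system_root[of n lo "real n + 2"]) (use pendant_char_upper[of n] assms in auto)
  then show ?thesis using lambda1_K1_join_Kn2_K1[of n] assms(1) by fastforce
qed

lemma lambda1_K1_join_Kn2_K1_le_pendant:
  assumes "4 \<le> n" and simple: "simple_graph V E" and conn: "connected_graph V E" and "card V = n"
    and pend: "pendant_at V E v w"
  shows "lambda1_dist {0..<n} (K1_join_Kn2_K1 n) \<le> lambda1_dist V E"
    and "\<not> graph_iso V E {0..<n} (K1_join_Kn2_K1 n) \<Longrightarrow>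
      lambda1_dist {0..<n} (K1_join_Kn2_K1 n) < lambda1_dist V E"
proof -
  obtain t where sys: "pendant_system n t (pendant_a n t) (pendant_c n t)"
    by (rule pendant_system_root[of n "real n - 1" "real n + 2"])
      (use pendant_char_lower[of n] pendant_char_upper[of n] assms(1) in auto)
  then have "lambda1_dist {0..<n} (K1_join_Kn2_K1 n) = t"
    using lambda1_K1_join_Kn2_K1[of n] assms(1) by simp
  then show "lambda1_dist {0..<n} (K1_join_Kn2_K1 n) \<le> lambda1_dist V E"
    and "\<not> graph_iso V E {0..<n} (K1_join_Kn2_K1 n) \<Longrightarrow>
      lambda1_dist {0..<n} (K1_join_Kn2_K1 n) < lambda1_dist V E"
    using lambda1_ge_pendant_system[OF simple conn \<open>card V = n\<close> pend sys] by simp_all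
qed

text \<open>Solving the second equation of split_system for b; the first one becomes
  split_char s t = 0.\<close>
definition split_b :: "nat \<Rightarrow> real \<Rightarrow> real" where
  "split_b s t = real s / (t - 2 * real s + 2)"

definition split_char :: "nat \<Rightarrow> real \<Rightarrow> real" where
  "split_char s t = (t - 2 * real s + 2) * (t - real s + 1) - (real s)\<^sup>2"

lemma split_system_root:
  assumes "1 \<le> s" "0 < split_char s hi" "2 * real s - 2 \<le> hi"
  obtains t where "t < hi" "split_system s t (split_b s t)"
proof -
  have "continuous_on {2 * real s - 2..hi} (split_char s)"
    unfolding split_char_def[abs_def] by (intro continuous_intros)
  moreover have "split_char s (2 * real s - 2) \<le> 0" by (simp add: split_char_def)
  ultimately obtain t where t: "2 * real s - 2 \<le> t" "t \<le> hi" "split_char s t = 0"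
    using IVT'[of "split_char s" "2 * real s - 2" 0 hi] assms(2,3) by force
  have "t \<noteq> 2 * real s - 2" using t(3) assms(1) by (auto simp: split_char_def)
  then have pos: "0 < t - 2 * real s + 2" using t(1) by simp
  have "t \<noteq> hi" using t(3) assms(2) by auto
  then have "t < hi" using t(2) by simp
  have b: "0 < split_b s t" unfolding split_b_def using pos assms(1) by simp
  have e2: "real s + 2 * (real s - 1) * split_b s t = t * split_b s t"
  proof -
    have "split_b s t * (t - 2 * real s + 2) = real s" unfolding split_b_def using pos by simp
    then show ?thesis by (simp add: algebra_simps)
  qed
  have "real s * split_b s t = real s * real s / (t - 2 * real s + 2)" by (simp add: split_b_def)
  also have "real s * real s = (t - 2 * real s + 2) * (t - real s + 1)"
    using t(3) by (simp add: split_char_def power2_eq_square)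
  finally have "real s * split_b s t = t - real s + 1" using pos by simp
  then show ?thesis using that \<open>t < hi\<close> b e2 unfolding split_system_def by auto
qed

lemma lambda1_S_graph_less:
  assumes "1 \<le> s" "0 < split_char s hi" "2 * real s - 2 \<le> hi"
  shows "lambda1_dist {0..<2 * s} (S_graph (2 * s) s) < hi"
  using split_system_root[OF assms] lambda1_S_graph[OF assms(1)] by metis

lemma lambda1_S_graph_less_split:
  assumes "1 \<le> s" and simple: "simple_graph V E" and conn: "connected_graph V E"
    and "card V = 2 * s" and S: "S \<subseteq> V" "card S = s"
    and indep: "\<And>p q. p \<in> V - S \<Longrightarrow> q \<in> V - S \<Longrightarrow> \<not> E p q"
    and not_iso: "\<not> graph_iso V E {0..<2 * s} (S_graph (2 * s) s)"
  shows "lambda1_dist {0..<2 * s} (S_graph (2 * s) s) < lambda1_dist V E"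
proof -
  have "split_char s (3 * real s) = (real s)\<^sup>2 + 5 * real s + 2"
    by (simp add: split_char_def power2_eq_square algebra_simps)
  moreover have "0 \<le> (real s)\<^sup>2 + 5 * real s" by simp
  ultimately have "0 < split_char s (3 * real s)" by linarith
  with assms(1) obtain t where sys: "split_system s t (split_b s t)"
    using split_system_root[of s "3 * real s"] by auto
  then have "lambda1_dist {0..<2 * s} (S_graph (2 * s) s) = t"
    using lambda1_S_graph assms(1) by blast
  then show ?thesis
    using lambda1_gt_split_system[OF simple conn \<open>card V = 2 * s\<close> S indep sys not_iso] by simp
qed

section \<open>Thresholds and the proof of the theorem\<close>

lemma isolated_pairs_mono:
  fixes lo i w :: int
  assumes "lo \<le> i" "i \<le> w"
  shows "lo * (2 * w - lo - 1) \<le> i * (2 * w - i - 1)"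
proof -
  have "i * (2 * w - i - 1) - lo * (2 * w - lo - 1) = (i - lo) * (2 * w - 1 - i - lo)"
    by (simp add: algebra_simps)
  moreover have "0 \<le> (i - lo) * (2 * w - 1 - i - lo) \<or> lo = i"
    using assms by (cases "lo = i") (auto intro: mult_nonneg_nonneg)
  ultimately show ?thesis by auto
qed

lemma isolated_pairs_ge_3n:
  fixes s w :: int
  assumes "1 \<le> s" "s \<le> w" "14 \<le> s + w"
  shows "3 * (s + w) \<le> max 2 s * (2 * w - max 2 s - 1)"
proof (cases "s \<le> 2")
  case False
  then have m: "max 2 s = s" by simp
  show ?thesis
  proof (cases "7 \<le> s")
    case True
    have "s * (2 * s - 3) \<le> w * (2 * s - 3)" using assms True by (intro mult_right_mono) auto
    moreover have "0 \<le> s * (s - 7)" using True by simp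
    ultimately show ?thesis unfolding m by (simp add: algebra_simps)
  next
    case False
    then have "s \<in> {3, 4, 5, 6}" using \<open>\<not> s \<le> 2\<close> by auto
    then show ?thesis unfolding m using assms by auto
  qed
qed (use assms in simp)

text \<open>Rational numbers separating the spectral radius of the extremal graph from the lower bounds
  obtained in the other cases.\<close>
definition large_threshold :: "nat \<Rightarrow> real" where
  "large_threshold n = (if n = 10 then 11 else if n = 12 then 27 / 2 else real n + 2)"

definition small_threshold :: "nat \<Rightarrow> real" where
  "small_threshold n = (if n = 4 then 18 / 5 else if n = 6 then 63 / 10 else 351 / 40)"

lemma large_threshold_le:
  assumes "10 \<le> n" "3 * n \<le> q"
  shows "large_threshold n \<le> real n - 1 + real q / real n"
proof -
  have "3 \<le> real q / real n" using assms by (simp add: le_divide_eq)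
  then show ?thesis using assms by (simp add: large_threshold_def le_divide_eq)
qed

lemma large_threshold_le_isolated_pairs:
  assumes "even n" "10 \<le> n" "n = s + w" "1 \<le> s" "s \<le> i" "2 \<le> i" "i \<le> w"
  shows "large_threshold n \<le> real n - 1 + of_int (int i * (2 * int w - int i - 1)) / real n"
proof -
  define lo where "lo = max 2 (int s)"
  define q where "q = int i * (2 * int w - int i - 1)"
  have q: "lo * (2 * int w - lo - 1) \<le> q"
    unfolding lo_def q_def using assms by (intro isolated_pairs_mono) auto
  have w: "int w = int n - int s" using assms by simp
  have "s \<le> n div 2" using assms by simp
  have "n = 10 \<or> n = 12 \<or> 14 \<le> n" using \<open>even n\<close> \<open>10 \<le> n\<close> by presburger
  then consider "n = 10" | "n = 12" | "14 \<le> n" by blast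
  then show ?thesis
  proof cases
    case 1
    then have "s \<in> {1, 2, 3, 4, 5}" using \<open>1 \<le> s\<close> \<open>s \<le> n div 2\<close> by auto
    then have "20 \<le> lo * (2 * int w - lo - 1)" using w 1 by (auto simp: lo_def)
    then show ?thesis using q 1 by (simp add: large_threshold_def q_def[symmetric] le_divide_eq)
  next
    case 2
    then have "s \<in> {1, 2, 3, 4, 5, 6}" using \<open>1 \<le> s\<close> \<open>s \<le> n div 2\<close> by auto
    then have "30 \<le> lo * (2 * int w - lo - 1)" using w 2 by (auto simp: lo_def)
    then show ?thesis using q 2 by (simp add: large_threshold_def q_def[symmetric] le_divide_eq)
  next
    case 3
    then have "3 * int n \<le> q"
      using isolated_pairs_ge_3n[of "int s" "int w"] q assms by (simp add: lo_def)
    then have "3 * n \<le> nat q" by linarith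
    then show ?thesis using large_threshold_le[of n "nat q"] 3 by (simp add: q_def)
  qed
qed

lemma small_threshold_le_isolated_pairs:
  assumes "n \<in> {4, 6, 8}" "n = s + w" "1 \<le> s" "s < w" "s \<le> i" "2 \<le> i" "i \<le> w"
  shows "small_threshold n \<le> real n - 1 + of_int (int i * (2 * int w - int i - 1)) / real n"
proof -
  define lo where "lo = max 2 (int s)"
  define q where "q = int i * (2 * int w - int i - 1)"
  have q: "lo * (2 * int w - lo - 1) \<le> q"
    unfolding lo_def q_def using assms by (intro isolated_pairs_mono) auto
  have w: "int w = int n - int s" using assms by simp
  consider "n = 4" | "n = 6" | "n = 8" using assms(1) by blast
  then show ?thesis
  proof cases
    case 1
    then have "s = 1" using assms by auto
    then have "3 \<le> lo * (2 * int w - lo - 1)" using w 1 by (simp add: lo_def)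
    then show ?thesis using q 1 by (simp add: small_threshold_def q_def[symmetric] le_divide_eq)
  next
    case 2
    then have "s \<in> {1, 2}" using assms by auto
    then have "8 \<le> lo * (2 * int w - lo - 1)" using w 2 by (auto simp: lo_def)
    then show ?thesis using q 2 by (simp add: small_threshold_def q_def[symmetric] le_divide_eq)
  next
    case 3
    then have "s \<in> {1, 2, 3}" using assms by auto
    then have "15 \<le> lo * (2 * int w - lo - 1)" using w 3 by (auto simp: lo_def)
    then show ?thesis using q 3 by (simp add: small_threshold_def q_def[symmetric] le_divide_eq)
  qed
qed

lemma lambda1_K1_join_Kn2_K1_less_large_threshold:
  assumes "even n" "10 \<le> n"
  shows "lambda1_dist {0..<n} (K1_join_Kn2_K1 n) < large_threshold n"
proof (rule lambda1_K1_join_Kn2_K1_less)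
  show "real n - 1 \<le> large_threshold n" by (simp add: large_threshold_def)
  have "n = 10 \<or> n = 12 \<or> 14 \<le> n" using assms by presburger
  then show "pendant_char n (large_threshold n) < 0"
    using pendant_char_upper[of n]
    by (auto simp: large_threshold_def pendant_char_def pendant_a_def pendant_c_def
        power2_eq_square)
qed (use assms in simp)

lemma small_threshold_le_lambda1_K1_join_Kn2_K1:
  assumes "n \<in> {4, 6, 8}"
  shows "small_threshold n \<le> lambda1_dist {0..<n} (K1_join_Kn2_K1 n)"
  using assms
  by (intro lambda1_K1_join_Kn2_K1_ge)
    (auto simp: small_threshold_def pendant_char_def pendant_a_def pendant_c_def power2_eq_square)

lemma lambda1_S_graph_less_small_threshold:
  assumes "n \<in> {4, 6, 8}"
  shows "lambda1_dist {0..<n} (S_graph n (n div 2)) < small_threshold n"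
proof -
  have "n = 2 * (n div 2)" "1 \<le> n div 2" using assms by auto
  moreover have "0 < split_char (n div 2) (small_threshold n)"
    "2 * real (n div 2) - 2 \<le> small_threshold n"
    using assms by (auto simp: split_char_def small_threshold_def power2_eq_square)
  ultimately show ?thesis using lambda1_S_graph_less[of "n div 2" "small_threshold n"] by metis
qed

lemma not_GBC_large_cases:
  assumes simple: "simple_graph V E" and conn: "connected_graph V E"
    and "odd k" "3 \<le> k" "card V = n" "even n" "10 \<le> n" "\<not> GBC k V E"
  shows "(\<exists>v w. pendant_at V E v w) \<or> large_threshold n \<le> lambda1_dist V E"
proof -
  obtain S where S: "S \<noteq> {}" "S \<subseteq> V" "0 \<le> bt_value k V E S"
    using nonneg_barrier_if_not_GBC[OF simple conn] assms by auto
  interpret vertex_deletion V E S using simple S(2) by unfold_locales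
  have far: "real n - 1 + real (card far_pairs) / real n \<le> lambda1_dist V E"
    using lambda1_ge_far_pairs[OF conn] \<open>card V = n\<close> by simp
  have n: "card W + card S = n" using card_W \<open>card V = n\<close> by simp
  show ?thesis
  proof (cases rule: barrier_cases[OF assms(3,4) S(1,3),
        case_names many_odd_comps many_isolated pendant])
    case many_odd_comps
    then have "3 * n \<le> card far_pairs" using card_far_pairs_ge_odd_comps n by linarith
    then show ?thesis using large_threshold_le[of n] far \<open>10 \<le> n\<close> by fastforce
  next
    case many_isolated
    have "card isolated \<le> card W" by (rule card_mono[OF finite_W isolated_subset])
    moreover have "1 \<le> card S" using S(1) S(2) finite_V
      by (simp add: Suc_le_eq card_gt_0_iff finite_subset)
    ultimately have "large_threshold n \<le> real n - 1
        + of_int (int (card isolated) * (2 * int (card W) - int (card isolated) - 1)) / real n"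
      using many_isolated n assms by (intro large_threshold_le_isolated_pairs) auto
    also have "\<dots> \<le> real n - 1 + real (card far_pairs) / real n"
      using divide_right_mono[OF of_int_le_iff[THEN iffD2, OF card_far_pairs_ge_isolated],
          of "real n"]
      by simp
    finally show ?thesis using far by simp
  next
    case pendant
    then obtain v w where "pendant_at V E v w" using pendant_if_single_isolated[OF conn] by blast
    then show ?thesis by blast
  qed
qed

lemma not_GBC_small_cases:
  assumes simple: "simple_graph V E" and conn: "connected_graph V E"
    and "odd k" "3 \<le> k" "card V = n" "n \<in> {4, 6, 8}" "\<not> GBC k V E"
  shows "(\<exists>v w. pendant_at V E v w)
    \<or> (\<exists>S. S \<subseteq> V \<and> card S = n div 2 \<and> (\<forall>p\<in>V - S. \<forall>q\<in>V - S. \<not> E p q))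
    \<or> small_threshold n \<le> lambda1_dist V E"
proof -
  have "even (card V)" "2 \<le> card V" using assms(5,6) by auto
  then obtain S where S: "S \<noteq> {}" "S \<subseteq> V" "0 \<le> bt_value k V E S"
    using nonneg_barrier_if_not_GBC[OF simple conn] assms(7) by metis
  interpret vertex_deletion V E S using simple S(2) by unfold_locales
  have far: "real n - 1 + real (card far_pairs) / real n \<le> lambda1_dist V E"
    using lambda1_ge_far_pairs[OF conn] \<open>card V = n\<close> by simp
  have n: "card W + card S = n" using card_W \<open>card V = n\<close> by simp
  show ?thesis
  proof (cases rule: barrier_cases[OF assms(3,4) S(1,3),
        case_names many_odd_comps many_isolated pendant])
    case many_odd_comps
    moreover have "n \<le> 8" using \<open>n \<in> {4, 6, 8}\<close> by auto
    ultimately show ?thesis using n by linarith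
  next
    case many_isolated
    have "card isolated \<le> card W" by (rule card_mono[OF finite_W isolated_subset])
    show ?thesis
    proof (cases "card S < card W")
      case True
      have "1 \<le> card S" using S(1) S(2) finite_V
        by (simp add: Suc_le_eq card_gt_0_iff finite_subset)
      then have "small_threshold n \<le> real n - 1
          + of_int (int (card isolated) * (2 * int (card W) - int (card isolated) - 1)) / real n"
        using many_isolated n True \<open>card isolated \<le> card W\<close> assms
        by (intro small_threshold_le_isolated_pairs) auto
      also have "\<dots> \<le> real n - 1 + real (card far_pairs) / real n"
        using divide_right_mono[OF of_int_le_iff[THEN iffD2, OF card_far_pairs_ge_isolated],
          of "real n"]
        by simp
      finally show ?thesis using far by simp
    next
      case False
      \<comment> \<open>Then s = i = w: every vertex outside S is isolated in G - S.\<close>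
      then have "card isolated = card W" using many_isolated \<open>card isolated \<le> card W\<close> by linarith
      then have "isolated = W" using card_subset_eq[OF finite_W isolated_subset] by blast
      then have "\<forall>p\<in>V - S. \<forall>q\<in>V - S. \<not> E p q"
        using isolated_neighbours_in_S unfolding W_def by blast
      moreover have "card S = n div 2" using n False many_isolated \<open>card isolated \<le> card W\<close>
        by linarith
      ultimately show ?thesis using S(2) by blast
    qed
  next
    case pendant
    then obtain v w where "pendant_at V E v w" using pendant_if_single_isolated[OF conn] by blast
    then show ?thesis by blast
  qed
qed

lemma GBC_if_lambda1_le_K1_join_Kn2_K1:
  assumes simple: "simple_graph V E" and conn: "connected_graph V E"
    and "odd k" "3 \<le> k" "card V = n" "even n" "10 \<le> n"
    and le: "lambda1_dist V E \<le> lambda1_dist {0..<n} (K1_join_Kn2_K1 n)"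
    and not_iso: "\<not> graph_iso V E {0..<n} (K1_join_Kn2_K1 n)"
  shows "GBC k V E"
proof (rule ccontr)
  assume "\<not> GBC k V E"
  then consider (pendant) v w where "pendant_at V E v w"
    | (dense) "large_threshold n \<le> lambda1_dist V E"
    using not_GBC_large_cases[OF simple conn] assms by blast
  then show False
  proof cases
    case pendant
    then show False
      using lambda1_K1_join_Kn2_K1_le_pendant(2)[OF _ simple conn \<open>card V = n\<close> _ not_iso] le assms
      by fastforce
  next
    case dense
    then show False using lambda1_K1_join_Kn2_K1_less_large_threshold le assms by fastforce
  qed
qed

lemma GBC_if_lambda1_le_S_graph:
  assumes simple: "simple_graph V E" and conn: "connected_graph V E"
    and "odd k" "3 \<le> k" "card V = n" "even n" "4 \<le> n" "n \<le> 8"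
    and le: "lambda1_dist V E \<le> lambda1_dist {0..<n} (S_graph n (n div 2))"
    and not_iso: "\<not> graph_iso V E {0..<n} (S_graph n (n div 2))"
  shows "GBC k V E"
proof (rule ccontr)
  assume "\<not> GBC k V E"
  have "n = 4 \<or> n = 6 \<or> n = 8" using \<open>even n\<close> \<open>4 \<le> n\<close> \<open>n \<le> 8\<close> by presburger
  then have n: "n \<in> {4, 6, 8}" by simp
  have S_less: "lambda1_dist {0..<n} (S_graph n (n div 2)) < small_threshold n"
    by (rule lambda1_S_graph_less_small_threshold[OF n])
  consider (pendant) v w where "pendant_at V E v w"
    | (split) S where "S \<subseteq> V" "card S = n div 2" "\<forall>p\<in>V - S. \<forall>q\<in>V - S. \<not> E p q"
    | (dense) "small_threshold n \<le> lambda1_dist V E"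
    using not_GBC_small_cases[OF simple conn \<open>odd k\<close> \<open>3 \<le> k\<close> \<open>card V = n\<close> n \<open>\<not> GBC k V E\<close>] by blast
  then show False
  proof cases
    case pendant
    then have "lambda1_dist {0..<n} (K1_join_Kn2_K1 n) \<le> lambda1_dist V E"
      using lambda1_K1_join_Kn2_K1_le_pendant(1)[OF _ simple conn \<open>card V = n\<close>] assms by blast
    then show False using small_threshold_le_lambda1_K1_join_Kn2_K1[OF n] S_less le by linarith
  next
    case split
    have "n = 2 * (n div 2)" "1 \<le> n div 2" using assms by auto
    then have "lambda1_dist {0..<n} (S_graph n (n div 2)) < lambda1_dist V E"
      using lambda1_S_graph_less_split[of "n div 2" V E S] simple conn split \<open>card V = n\<close> not_iso
      by metis
    then show False using le by linarith
  next
    case dense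
    then show False using S_less le by linarith
  qed
qed

theorem theorem4:
  fixes V :: "'a set" and E :: "'a \<Rightarrow> 'a \<Rightarrow> bool" and k n :: nat
  assumes "simple_graph V E" and "connected_graph V E"
    and "odd k" and "k \<ge> 3"
    and "card V = n" and "even n" and "n \<ge> 4"
  shows "(n \<ge> 10 \<and> lambda1_dist V E \<le> lambda1_dist {0..<n} (K1_join_Kn2_K1 n)
            \<longrightarrow> \<not> graph_iso V E {0..<n} (K1_join_Kn2_K1 n) \<longrightarrow> GBC k V E)
       \<and> (n \<le> 8 \<and> lambda1_dist V E \<le> lambda1_dist {0..<n} (S_graph n (n div 2))
            \<longrightarrow> \<not> graph_iso V E {0..<n} (S_graph n (n div 2)) \<longrightarrow> GBC k V E)"
  using GBC_if_lambda1_le_K1_join_Kn2_K1[OF assms(1-6)] GBC_if_lambda1_le_S_graph[OF assms(1-7)]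
  by blast

end
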